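(* Let $n\ge 2$ and $\Omega_Q=\{0,1\}^n$. For $i\neq j$ let $T^{(i,j)}$ be the Markov matrix on $\Omega_Q$ that deterministically swaps coordinates $i$ and $j$ of $\vec q$, let $T_p=\frac{1}{n(n-1)}\sum_{i\neq j}T^{(i,j)}$ and $T=\frac1n I+\frac{n-1}{n}T_p$. For $\sigma\in S_n$ let $[\sigma(\vec q)]_i=q_{\sigma^{-1}(i)}$, and for a probability distribution $\nu$ on $\Omega_Q$ let $\nu S=\frac{1}{n!}\sum_{\sigma\in S_n}\nu(\sigma(\cdot))$ (the distribution obtained by applying a uniformly random permutation of coordinates). Then every probability distribution $\nu$ on $\Omega_Q$ satisfies $\nu T^t\to\nu S$ as $t\to\infty$. Moreover, defining $$t_{mixT}(\varepsilon)=\max_{\nu}\min\{t:\|\nu T^t-\nu S\|_{TV}\le\varepsilon\},$$ where the maximum is over all probability distributions $\nu$ on $\Omega_Q$, one has $t_{mixT}(\varepsilon)=\Theta(n\ln(n/\varepsilon))$.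
   Context: $\|\mu-\mu'\|_{TV}=\frac12\sum_x|\mu(x)-\mu'(x)|$. Distributions are row vectors and Markov matrices act on the right. *)

theory Defs
  imports "HOL-Analysis.Analysis" "HOL-Combinatorics.Permutations"
begin

text \<open>State space Omega_Q = {0,1}^n, coordinates indexed 0..n-1, as boolean lists of length n.\<close>
definition OmegaQ :: "nat \<Rightarrow> bool list set" where
  "OmegaQ n = {q. length q = n}"

definition is_dist :: "nat \<Rightarrow> (bool list \<Rightarrow> real) \<Rightarrow> bool" where
  "is_dist n \<nu> \<longleftrightarrow> (\<forall>q\<in>OmegaQ n. 0 \<le> \<nu> q) \<and> (\<forall>q. q \<notin> OmegaQ n \<longrightarrow> \<nu> q = 0)
     \<and> (\<Sum>q\<in>OmegaQ n. \<nu> q) = 1"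

type_synonym qmat = "bool list \<Rightarrow> bool list \<Rightarrow> real"

definition vecmat :: "nat \<Rightarrow> (bool list \<Rightarrow> real) \<Rightarrow> qmat \<Rightarrow> (bool list \<Rightarrow> real)" where
  "vecmat n \<nu> M = (\<lambda>y. \<Sum>x\<in>OmegaQ n. \<nu> x * M x y)"

definition matmul :: "nat \<Rightarrow> qmat \<Rightarrow> qmat \<Rightarrow> qmat" where
  "matmul n A B = (\<lambda>x z. \<Sum>y\<in>OmegaQ n. A x y * B y z)"

definition idmat :: qmat where
  "idmat = (\<lambda>x y. if x = y then 1 else 0)"

fun matpow :: "nat \<Rightarrow> qmat \<Rightarrow> nat \<Rightarrow> qmat" where
  "matpow n M 0 = idmat"
| "matpow n M (Suc t) = matmul n (matpow n M t) M"

definition swapQ :: "nat \<Rightarrow> nat \<Rightarrow> bool list \<Rightarrow> bool list" where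
  "swapQ i j q = q[i := q ! j, j := q ! i]"

definition Tswap :: "nat \<Rightarrow> nat \<Rightarrow> qmat" where
  "Tswap i j = (\<lambda>x y. if y = swapQ i j x then 1 else 0)"

definition Tp :: "nat \<Rightarrow> qmat" where
  "Tp n = (\<lambda>x y. (1 / (real n * (real n - 1))) *
      (\<Sum>(i,j)\<in>{(i,j). i < n \<and> j < n \<and> i \<noteq> j}. Tswap i j x y))"

definition Tm :: "nat \<Rightarrow> qmat" where
  "Tm n = (\<lambda>x y. (1 / real n) * idmat x y + ((real n - 1) / real n) * Tp n x y)"

definition permQ :: "nat \<Rightarrow> (nat \<Rightarrow> nat) \<Rightarrow> bool list \<Rightarrow> bool list" where
  "permQ n \<sigma> q = map (\<lambda>i. q ! inv \<sigma> i) [0..<n]"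

definition symm :: "nat \<Rightarrow> (bool list \<Rightarrow> real) \<Rightarrow> (bool list \<Rightarrow> real)" where
  "symm n \<nu> = (\<lambda>q. if q \<in> OmegaQ n then
      (1 / fact n) * (\<Sum>\<sigma>\<in>{\<sigma>. \<sigma> permutes {..<n}}. \<nu> (permQ n \<sigma> q)) else 0)"

definition tv :: "nat \<Rightarrow> (bool list \<Rightarrow> real) \<Rightarrow> (bool list \<Rightarrow> real) \<Rightarrow> real" where
  "tv n \<mu> \<mu>' = (1/2) * (\<Sum>q\<in>OmegaQ n. \<bar>\<mu> q - \<mu>' q\<bar>)"

definition tmixT :: "nat \<Rightarrow> real \<Rightarrow> nat" where
  "tmixT n \<epsilon> = Sup ((\<lambda>\<nu>. LEAST t. tv n (vecmat n \<nu> (matpow n (Tm n) t)) (symm n \<nu>) \<le> \<epsilon>)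
                    ` {\<nu>. is_dist n \<nu>})"

end

theory Submission
  imports Defs
begin

text \<open>
  Upper bound, by path coupling in dual form. \<open>T\<close> acts on functions by averaging over all \<open>n\<^sup>2\<close>
  swaps. Suppose \<open>|f x - f y| \<le> L d(x, y)\<close> whenever \<open>x\<close> and \<open>y\<close> have the same number of ones, \<open>d\<close>
  being half their Hamming distance. Coupling the swap \<open>(i, j)\<close> at \<open>x\<close> with the swap \<open>(r i, r j)\<close>
  at \<open>y\<close>, for an involution \<open>r\<close> carrying \<open>x\<close> onto \<open>y\<close>, shows that \<open>T f\<close> has the same property with
  constant \<open>\<rho> L\<close>, where \<open>\<rho> = 1 - 2/n + 4/n\<^sup>2\<close>. As \<open>\<nu> S\<close> is \<open>T\<close>-invariant, pairing \<open>\<nu> T^t - \<nu> S\<close>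
  with \<open>f\<close> compares \<open>T^t f\<close> at a point with \<open>T^t f\<close> at a random permutation of it, whence
  \<open>\<parallel>\<nu> T^t - \<nu> S\<parallel> \<le> n \<rho>^t \<le> n exp (-t/n)\<close>.

  Lower bound, by Wilson's method. The number \<open>Y\<close> of ones among the first \<open>n div 2\<close> coordinates,
  centred on each level set of the weight, is an eigenfunction of \<open>T\<close> with eigenvalue \<open>1 - 2/n\<close>,
  and \<open>T (Y\<^sup>2) \<le> (1 - 4/n) Y\<^sup>2 + 1\<close>. Starting from the state whose ones are exactly the first
  \<open>n div 2\<close> coordinates, the mean of \<open>Y\<close> gives \<open>t \<ge> (n/4) ln (1/(16 \<epsilon>))\<close>, and Chebyshev's
  inequality under both \<open>\<nu> T^t\<close> and \<open>\<nu> S\<close> gives \<open>t \<ge> (n/8) ln (n/256)\<close>.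
\<close>

lemma finite_OmegaQ [simp]: "finite (OmegaQ n)"
proof -
  have "finite {xs. set xs \<subseteq> (UNIV::bool set) \<and> length xs = n}"
    by (rule finite_lists_length_eq) simp
  then show ?thesis by (simp add: OmegaQ_def)
qed

lemma length_swapQ [simp]: "length (swapQ i j q) = length q"
  by (simp add: swapQ_def)

lemma swapQ_in_OmegaQ [simp]: "swapQ i j q \<in> OmegaQ n \<longleftrightarrow> q \<in> OmegaQ n"
  by (simp add: OmegaQ_def)

lemma swapQ_same [simp]: "swapQ i i q = q"
  by (simp add: swapQ_def)

lemma nth_swapQ:
  "i < length q \<Longrightarrow> j < length q \<Longrightarrow> a < length q \<Longrightarrow>
    swapQ i j q ! a = q ! Transposition.transpose i j a"
  by (auto simp: swapQ_def transpose_def nth_list_update)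

lemma swapQ_swapQ:
  assumes q: "q \<in> OmegaQ n" and ij: "i < n" "j < n"
  shows "swapQ i j (swapQ i j q) = q"
proof (rule nth_equalityI)
  fix a assume "a < length (swapQ i j (swapQ i j q))"
  then have "a < n" "Transposition.transpose i j a < n"
    using q ij by (auto simp: OmegaQ_def Transposition.transpose_def)
  then show "swapQ i j (swapQ i j q) ! a = q ! a"
    using q ij by (simp add: OmegaQ_def nth_swapQ)
qed simp

lemma length_permQ [simp]: "length (permQ n \<sigma> q) = n"
  by (simp add: permQ_def)

lemma permQ_in_OmegaQ [simp]: "permQ n \<sigma> q \<in> OmegaQ n"
  by (simp add: OmegaQ_def)

lemma nth_permQ: "a < n \<Longrightarrow> permQ n \<sigma> q ! a = q ! inv \<sigma> a"
  by (simp add: permQ_def)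

lemma permutes_lessThan_less: "\<sigma> permutes {..<n} \<Longrightarrow> a < n \<Longrightarrow> \<sigma> a < n"
  using permutes_in_image[of \<sigma> "{..<n}" a] by simp

lemma permQ_permQ_inv:
  assumes s: "\<sigma> permutes {..<n}" and q: "q \<in> OmegaQ n"
  shows "permQ n \<sigma> (permQ n (inv \<sigma>) q) = q"
proof (rule nth_equalityI)
  fix a assume "a < length (permQ n \<sigma> (permQ n (inv \<sigma>) q))"
  then have "a < n" "inv \<sigma> a < n"
    using permutes_lessThan_less[OF permutes_inv[OF s]] by auto
  then show "permQ n \<sigma> (permQ n (inv \<sigma>) q) ! a = q ! a"
    by (simp add: nth_permQ permutes_inv_inv[OF s] permutes_inverses[OF s])
qed (use q in \<open>simp add: OmegaQ_def\<close>)

lemma permQ_inv_permQ: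
  assumes s: "\<sigma> permutes {..<n}" and q: "q \<in> OmegaQ n"
  shows "permQ n (inv \<sigma>) (permQ n \<sigma> q) = q"
  using permQ_permQ_inv[OF permutes_inv[OF s] q] by (simp add: permutes_inv_inv[OF s])

lemma swapQ_eq_permQ:
  assumes q: "q \<in> OmegaQ n" and ij: "i < n" "j < n"
  shows "swapQ i j q = permQ n (Transposition.transpose i j) q"
proof (rule nth_equalityI)
  fix a assume "a < length (swapQ i j q)"
  then show "swapQ i j q ! a = permQ n (Transposition.transpose i j) q ! a"
    using q ij by (simp add: OmegaQ_def nth_permQ nth_swapQ)
qed (use q in \<open>simp add: OmegaQ_def\<close>)

lemma permQ_swapQ:
  assumes s: "\<sigma> permutes {..<n}" and q: "q \<in> OmegaQ n" and ij: "i < n" "j < n"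
  shows "permQ n \<sigma> (swapQ i j q) = permQ n (\<sigma> \<circ> Transposition.transpose i j) q"
proof (rule nth_equalityI)
  fix a assume "a < length (permQ n \<sigma> (swapQ i j q))"
  then have a: "a < n" "inv \<sigma> a < n"
    using permutes_lessThan_less[OF permutes_inv[OF s]] by auto
  have "inv (\<sigma> \<circ> Transposition.transpose i j) = Transposition.transpose i j \<circ> inv \<sigma>"
    using o_inv_distrib[OF permutes_bij[OF s] bij_transpose] by simp
  then show "permQ n \<sigma> (swapQ i j q) ! a = permQ n (\<sigma> \<circ> Transposition.transpose i j) q ! a"
    using a q ij by (simp add: nth_permQ nth_swapQ OmegaQ_def)
qed simp

definition weight :: "nat \<Rightarrow> bool list \<Rightarrow> nat" where
  "weight n q = card {a. a < n \<and> q ! a}"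

definition bitval :: "bool list \<Rightarrow> nat \<Rightarrow> real" where
  "bitval q a = (if q ! a then 1 else 0)"

lemma weight_eq_sum_bitval: "real (weight n q) = (\<Sum>a<n. bitval q a)"
proof -
  have "{a. a < n \<and> q ! a} = {a \<in> {..<n}. q ! a}" by auto
  then show ?thesis
    by (simp add: weight_def bitval_def sum.inter_filter[symmetric])
qed

lemma weight_permQ:
  assumes s: "\<sigma> permutes {..<n}" and q: "q \<in> OmegaQ n"
  shows "weight n (permQ n \<sigma> q) = weight n q"
proof -
  have "{a. a < n \<and> permQ n \<sigma> q ! a} = \<sigma> ` {a. a < n \<and> q ! a}"
  proof safe
    fix a assume a: "a < n" "permQ n \<sigma> q ! a"
    then show "a \<in> \<sigma> ` {a. a < n \<and> q ! a}"
      using permutes_lessThan_less[OF permutes_inv[OF s] a(1)]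
      by (intro image_eqI[of _ _ "inv \<sigma> a"]) (auto simp: nth_permQ permutes_inverses[OF s])
  next
    fix a assume "a < n" "q ! a"
    then show "\<sigma> a < n" "permQ n \<sigma> q ! \<sigma> a"
      using permutes_lessThan_less[OF s] by (auto simp: nth_permQ permutes_inverses[OF s])
  qed
  moreover have "inj_on \<sigma> {a. a < n \<and> q ! a}"
    using permutes_inj[OF s] by (auto simp: inj_on_def inj_def)
  ultimately show ?thesis unfolding weight_def by (simp add: card_image)
qed

lemma weight_swapQ:
  assumes "q \<in> OmegaQ n" "i < n" "j < n"
  shows "weight n (swapQ i j q) = weight n q"
  using assms by (simp add: swapQ_eq_permQ weight_permQ permutes_swap_id)

lemma sum_lessThan_remove2:
  fixes h :: "nat \<Rightarrow> real"
  assumes "a < n" "b < n" "a \<noteq> b"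
  shows "(\<Sum>i<n. h i) = h a + h b + (\<Sum>i\<in>{..<n}-{a,b}. h i)"
proof -
  have "{..<n} = insert a (insert b ({..<n}-{a,b}))" using assms by auto
  then have "(\<Sum>i<n. h i) = (\<Sum>i\<in>insert a (insert b ({..<n}-{a,b})). h i)" by simp
  then show ?thesis using assms by simp
qed

lemma sum_transpose_pair:
  fixes F :: "nat \<Rightarrow> nat \<Rightarrow> real"
  assumes ab: "a < n" "b < n" "a \<noteq> b"
  shows "(\<Sum>i<n. \<Sum>j<n. F (Transposition.transpose i j a) (Transposition.transpose i j b))
     = ((real n - 2)^2 + 2) * F a b + 2 * F b a + 2 * (\<Sum>c\<in>{..<n}-{a,b}. F c b + F a c)"
proof -
  define R where "R = {..<n}-{a,b}"
  have card_R: "real (card R) = real n - 2"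
    using ab by (simp add: R_def card_Diff_subset of_nat_diff)
  let ?H = "\<lambda>i. \<Sum>j<n. F (Transposition.transpose i j a) (Transposition.transpose i j b)"
  have split: "?H i = F (Transposition.transpose i a a) (Transposition.transpose i a b)
      + F (Transposition.transpose i b a) (Transposition.transpose i b b)
      + (\<Sum>j\<in>R. F (Transposition.transpose i j a) (Transposition.transpose i j b))" for i
    unfolding R_def by (rule sum_lessThan_remove2[OF ab])
  have Ha: "?H a = F a b + F b a + (\<Sum>j\<in>R. F j b)"
    unfolding split using ab by (intro arg_cong2[where f = "(+)"] sum.cong) (auto simp: R_def transpose_def)
  have Hb: "?H b = F b a + F a b + (\<Sum>j\<in>R. F a j)"
    unfolding split using ab by (intro arg_cong2[where f = "(+)"] sum.cong) (auto simp: R_def transpose_def)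
  have Hi: "?H i = F i b + F a i + (real n - 2) * F a b" if "i \<in> R" for i
  proof -
    have "(\<Sum>j\<in>R. F (Transposition.transpose i j a) (Transposition.transpose i j b)) = (\<Sum>j\<in>R. F a b)"
      by (rule sum.cong) (use that ab in \<open>auto simp: R_def transpose_def\<close>)
    then show ?thesis
      unfolding split using that card_R ab by (auto simp: R_def transpose_def)
  qed
  have "(\<Sum>i<n. ?H i) = ?H a + ?H b + (\<Sum>i\<in>R. F i b + F a i + (real n - 2) * F a b)"
    unfolding sum_lessThan_remove2[OF ab, of ?H] R_def[symmetric] using Hi by simp
  also have "\<dots> = ?H a + ?H b + (\<Sum>i\<in>R. F i b + F a i) + (real n - 2) * (real n - 2) * F a b"
    using card_R by (simp add: sum.distrib)
  finally show ?thesis unfolding Ha Hb R_def[symmetric]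
    by (simp add: sum.distrib power2_eq_square algebra_simps)
qed

lemma sum_transpose_point:
  fixes h :: "nat \<Rightarrow> real"
  assumes "2 \<le> n" "a < n"
  shows "(\<Sum>i<n. \<Sum>j<n. h (Transposition.transpose i j a))
     = (real n ^ 2 - 2 * real n) * h a + 2 * (\<Sum>c<n. h c)"
proof -
  define b where "b = (if a = 0 then 1 else 0::nat)"
  have ab: "a < n" "b < n" "a \<noteq> b" using assms by (auto simp: b_def)
  have "(\<Sum>c\<in>{..<n}-{a,b}. h c + h a) = (\<Sum>c\<in>{..<n}-{a,b}. h c) + (real n - 2) * h a"
    using ab by (simp add: sum.distrib card_Diff_subset of_nat_diff)
  then show ?thesis
    using sum_transpose_pair[OF ab, of "\<lambda>c e. h c"] sum_lessThan_remove2[OF ab, of h]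
    by (simp add: power2_eq_square algebra_simps)
qed

definition Tact :: "nat \<Rightarrow> (bool list \<Rightarrow> real) \<Rightarrow> bool list \<Rightarrow> real" where
  "Tact n f = (\<lambda>q. \<Sum>y\<in>OmegaQ n. Tm n q y * f y)"

lemma sum_Tswap: "q \<in> OmegaQ n \<Longrightarrow> (\<Sum>y\<in>OmegaQ n. Tswap i j q y * f y) = f (swapQ i j q)"
proof -
  have "(\<Sum>y\<in>OmegaQ n. Tswap i j q y * f y) = (\<Sum>y\<in>OmegaQ n. if swapQ i j q = y then f y else 0)"
    by (rule sum.cong) (auto simp: Tswap_def)
  then show "q \<in> OmegaQ n \<Longrightarrow> ?thesis" by simp
qed

lemma sum_idmat: "q \<in> OmegaQ n \<Longrightarrow> (\<Sum>y\<in>OmegaQ n. idmat q y * f y) = f q"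
proof -
  have "(\<Sum>y\<in>OmegaQ n. idmat q y * f y) = (\<Sum>y\<in>OmegaQ n. if q = y then f y else 0)"
    by (rule sum.cong) (auto simp: idmat_def)
  then show "q \<in> OmegaQ n \<Longrightarrow> ?thesis" by simp
qed

lemma sum_swapQ_off_diagonal:
  "(\<Sum>i<n. \<Sum>j<n. f (swapQ i j q))
     = (\<Sum>(i,j)\<in>{(i,j). i < n \<and> j < n \<and> i \<noteq> j}. f (swapQ i j q)) + real n * f q"
proof -
  define Off where "Off = {(i,j). i < n \<and> j < n \<and> i \<noteq> j}"
  have "{..<n} \<times> {..<n} = Off \<union> (\<lambda>i. (i,i)) ` {..<n}" "Off \<inter> (\<lambda>i. (i,i)) ` {..<n} = {}"
    unfolding Off_def by auto
  moreover have "finite Off"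
    unfolding Off_def by (rule finite_subset[of _ "{..<n} \<times> {..<n}"]) auto
  ultimately have "(\<Sum>(i,j)\<in>{..<n} \<times> {..<n}. f (swapQ i j q))
      = (\<Sum>(i,j)\<in>Off. f (swapQ i j q)) + (\<Sum>(i,j)\<in>(\<lambda>i. (i,i)) ` {..<n}. f (swapQ i j q))"
    by (simp add: sum.union_disjoint)
  also have "(\<Sum>(i,j)\<in>(\<lambda>i. (i,i)) ` {..<n}. f (swapQ i j q)) = real n * f q"
    by (subst sum.reindex) (auto simp: inj_on_def)
  finally show ?thesis by (simp add: Off_def sum.cartesian_product)
qed

text \<open>Since a swap with \<open>i = j\<close> is the identity, \<open>T\<close> is exactly the uniform average over all \<open>n\<^sup>2\<close>
  ordered pairs \<open>(i, j)\<close>.\<close>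

lemma Tact_eq_swap_average:
  assumes n: "2 \<le> n" and q: "q \<in> OmegaQ n"
  shows "Tact n f q = (\<Sum>i<n. \<Sum>j<n. f (swapQ i j q)) / real n ^ 2"
proof -
  define Off where "Off = {(i,j). i < n \<and> j < n \<and> i \<noteq> j}"
  have finite_Off: "finite Off"
    unfolding Off_def by (rule finite_subset[of _ "{..<n} \<times> {..<n}"]) auto
  have "(\<Sum>y\<in>OmegaQ n. (\<Sum>(i,j)\<in>Off. Tswap i j q y) * f y)
      = (\<Sum>y\<in>OmegaQ n. \<Sum>p\<in>Off. Tswap (fst p) (snd p) q y * f y)"
    by (simp add: sum_distrib_right case_prod_beta)
  also have "\<dots> = (\<Sum>p\<in>Off. \<Sum>y\<in>OmegaQ n. Tswap (fst p) (snd p) q y * f y)"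
    by (rule sum.swap)
  also have "\<dots> = (\<Sum>(i,j)\<in>Off. f (swapQ i j q))"
    using q by (simp add: sum_Tswap case_prod_beta)
  finally have off: "(\<Sum>y\<in>OmegaQ n. (\<Sum>(i,j)\<in>Off. Tswap i j q y) * f y) = (\<Sum>(i,j)\<in>Off. f (swapQ i j q))" .
  have nz: "real n \<noteq> 0" "real n - 1 \<noteq> 0" using n by auto
  have "Tact n f q = (\<Sum>y\<in>OmegaQ n. (1 / real n) * (idmat q y * f y)
      + 1 / (real n * real n) * ((\<Sum>(i,j)\<in>Off. Tswap i j q y) * f y))"
    unfolding Tact_def Tm_def Tp_def Off_def[symmetric]
    using nz by (intro sum.cong refl) (simp add: field_simps)
  also have "\<dots> = (1 / real n) * (\<Sum>y\<in>OmegaQ n. idmat q y * f y)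
      + 1 / (real n * real n) * (\<Sum>y\<in>OmegaQ n. (\<Sum>(i,j)\<in>Off. Tswap i j q y) * f y)"
    by (simp add: sum.distrib sum_distrib_left)
  also have "\<dots> = (real n * f q + (\<Sum>(i,j)\<in>Off. f (swapQ i j q))) / real n ^ 2"
    unfolding sum_idmat[OF q] off using nz by (simp add: field_simps power2_eq_square)
  finally show ?thesis by (simp add: sum_swapQ_off_diagonal Off_def)
qed

lemma Tact_cong: "(\<And>y. y \<in> OmegaQ n \<Longrightarrow> f y = g y) \<Longrightarrow> Tact n f q = Tact n g q"
  by (simp add: Tact_def)

lemma Tact_linear: "Tact n (\<lambda>y. a * f y + b * g y) q = a * Tact n f q + b * Tact n g q"
  by (simp add: Tact_def algebra_simps sum.distrib sum_distrib_left)

lemma Tact_scale: "Tact n (\<lambda>y. c * f y) q = c * Tact n f q"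
  using Tact_linear[of n c f 0 f q] by simp

lemma Tact_sum: "Tact n (\<lambda>y. \<Sum>a\<in>A. F a y) q = (\<Sum>a\<in>A. Tact n (F a) q)"
  unfolding Tact_def by (simp add: sum_distrib_left) (rule sum.swap)

lemma Tact_const: "2 \<le> n \<Longrightarrow> q \<in> OmegaQ n \<Longrightarrow> Tact n (\<lambda>y. c) q = c"
  by (simp add: Tact_eq_swap_average power2_eq_square)

lemma Tact_mono:
  "2 \<le> n \<Longrightarrow> q \<in> OmegaQ n \<Longrightarrow> (\<And>y. y \<in> OmegaQ n \<Longrightarrow> f y \<le> g y) \<Longrightarrow> Tact n f q \<le> Tact n g q"
  by (simp add: Tact_eq_swap_average divide_right_mono sum_mono)

lemma Tact_iter_linear:
  "q \<in> OmegaQ n \<Longrightarrow>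
    (Tact n ^^ t) (\<lambda>y. a * f y + b * g y) q = a * (Tact n ^^ t) f q + b * (Tact n ^^ t) g q"
proof (induction t arbitrary: q)
  case (Suc t)
  have "(Tact n ^^ Suc t) (\<lambda>y. a * f y + b * g y) q
      = Tact n (\<lambda>y. a * (Tact n ^^ t) f y + b * (Tact n ^^ t) g y) q"
    unfolding funpow.simps o_apply by (rule Tact_cong) (rule Suc.IH)
  then show ?case by (simp add: Tact_linear)
qed simp

lemma Tact_iter_const: "2 \<le> n \<Longrightarrow> q \<in> OmegaQ n \<Longrightarrow> (Tact n ^^ t) (\<lambda>y. c) q = c"
proof (induction t arbitrary: q)
  case (Suc t)
  have "(Tact n ^^ Suc t) (\<lambda>y. c) q = Tact n (\<lambda>y. c) q"
    unfolding funpow.simps o_apply by (rule Tact_cong) (rule Suc.IH[OF Suc.prems(1)])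
  then show ?case using Suc.prems by (simp add: Tact_const)
qed simp

lemma Tact_iter_mono:
  "2 \<le> n \<Longrightarrow> q \<in> OmegaQ n \<Longrightarrow> (\<And>y. y \<in> OmegaQ n \<Longrightarrow> f y \<le> g y) \<Longrightarrow>
    (Tact n ^^ t) f q \<le> (Tact n ^^ t) g q"
  by (induction t arbitrary: q) (simp_all add: Tact_mono)

lemma matpow_pairing:
  "q \<in> OmegaQ n \<Longrightarrow> (\<Sum>z\<in>OmegaQ n. matpow n (Tm n) t q z * f z) = (Tact n ^^ t) f q"
proof (induction t arbitrary: f)
  case 0
  then show ?case by (simp add: sum_idmat)
next
  case (Suc t)
  have "(\<Sum>z\<in>OmegaQ n. matpow n (Tm n) (Suc t) q z * f z)
      = (\<Sum>y\<in>OmegaQ n. matpow n (Tm n) t q y * Tact n f y)"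
    unfolding matpow.simps matmul_def Tact_def sum_distrib_left sum_distrib_right mult.assoc
    by (rule sum.swap)
  then show ?case by (simp add: Suc funpow_Suc_right del: funpow.simps)
qed

abbreviation evol :: "nat \<Rightarrow> (bool list \<Rightarrow> real) \<Rightarrow> nat \<Rightarrow> bool list \<Rightarrow> real" where
  "evol n \<nu> t \<equiv> vecmat n \<nu> (matpow n (Tm n) t)"

lemma evol_pairing:
  "(\<Sum>z\<in>OmegaQ n. evol n \<nu> t z * f z) = (\<Sum>x\<in>OmegaQ n. \<nu> x * (Tact n ^^ t) f x)"
proof -
  have "(\<Sum>z\<in>OmegaQ n. evol n \<nu> t z * f z)
      = (\<Sum>x\<in>OmegaQ n. \<nu> x * (\<Sum>z\<in>OmegaQ n. matpow n (Tm n) t x z * f z))"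
    unfolding vecmat_def sum_distrib_left sum_distrib_right mult.assoc by (rule sum.swap)
  then show ?thesis by (simp add: matpow_pairing cong: sum.cong)
qed

lemma card_permutations_lessThan: "card {\<sigma>. \<sigma> permutes {..<n::nat}} = fact n"
  using card_permutations[of "{..<n}" n] by simp

lemma symm_swapQ:
  assumes q: "q \<in> OmegaQ n" and ij: "i < n" "j < n"
  shows "symm n \<nu> (swapQ i j q) = symm n \<nu> q"
proof -
  let ?S = "{\<sigma>. \<sigma> permutes {..<n}}"
  let ?t = "Transposition.transpose i j"
  have t: "?t permutes {..<n}" using ij by (simp add: permutes_swap_id)
  have "(\<Sum>\<sigma>\<in>?S. \<nu> (permQ n \<sigma> (swapQ i j q))) = (\<Sum>\<sigma>\<in>?S. \<nu> (permQ n (\<sigma> \<circ> ?t) q))"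
    by (rule sum.cong) (use q ij in \<open>auto simp: permQ_swapQ\<close>)
  also have "\<dots> = (\<Sum>\<sigma>\<in>?S. \<nu> (permQ n \<sigma> q))"
    by (rule sum.reindex_bij_witness[of _ "\<lambda>\<sigma>. \<sigma> \<circ> ?t" "\<lambda>\<sigma>. \<sigma> \<circ> ?t"])
       (auto simp: o_assoc[symmetric] permutes_compose[OF t])
  finally show ?thesis using q by (simp add: symm_def)
qed

lemma swap_invariant_pairing_Tact:
  assumes n: "2 \<le> n"
    and inv: "\<And>z i j. z \<in> OmegaQ n \<Longrightarrow> i < n \<Longrightarrow> j < n \<Longrightarrow> \<pi> (swapQ i j z) = \<pi> z"
  shows "(\<Sum>z\<in>OmegaQ n. \<pi> z * Tact n f z) = (\<Sum>z\<in>OmegaQ n. \<pi> z * f z)"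
proof -
  have swap: "(\<Sum>z\<in>OmegaQ n. \<pi> z * f (swapQ i j z)) = (\<Sum>z\<in>OmegaQ n. \<pi> z * f z)"
    if ij: "i < n" "j < n" for i j
    by (rule sum.reindex_bij_witness[of _ "swapQ i j" "swapQ i j"])
       (use ij inv in \<open>auto simp: swapQ_swapQ\<close>)
  have "(\<Sum>z\<in>OmegaQ n. \<pi> z * Tact n f z)
      = (\<Sum>z\<in>OmegaQ n. \<Sum>i<n. \<Sum>j<n. \<pi> z * f (swapQ i j z)) / real n ^ 2"
    by (simp add: Tact_eq_swap_average[OF n] sum_distrib_left sum_divide_distrib)
  also have "\<dots> = (\<Sum>i<n. \<Sum>j<n. \<Sum>z\<in>OmegaQ n. \<pi> z * f (swapQ i j z)) / real n ^ 2"
    by (simp add: sum.swap[of _ "OmegaQ n" "{..<n}"])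
  also have "\<dots> = (\<Sum>z\<in>OmegaQ n. \<pi> z * f z)"
    using n by (simp add: swap power2_eq_square)
  finally show ?thesis .
qed

lemma symm_pairing_Tact:
  "2 \<le> n \<Longrightarrow> (\<Sum>z\<in>OmegaQ n. symm n \<nu> z * Tact n f z) = (\<Sum>z\<in>OmegaQ n. symm n \<nu> z * f z)"
  by (simp add: swap_invariant_pairing_Tact symm_swapQ)

lemma symm_pairing_Tact_iter:
  assumes n: "2 \<le> n"
  shows "(\<Sum>z\<in>OmegaQ n. symm n \<nu> z * (Tact n ^^ t) f z) = (\<Sum>z\<in>OmegaQ n. symm n \<nu> z * f z)"
  by (induction t arbitrary: f) (simp_all add: symm_pairing_Tact[OF n] funpow_Suc_right del: funpow.simps)

lemma symm_pairing:
  "(\<Sum>z\<in>OmegaQ n. symm n \<nu> z * g z)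
     = (1 / fact n) * (\<Sum>\<sigma>\<in>{\<sigma>. \<sigma> permutes {..<n}}. \<Sum>x\<in>OmegaQ n. \<nu> x * g (permQ n (inv \<sigma>) x))"
proof -
  let ?S = "{\<sigma>. \<sigma> permutes {..<n}}"
  have "(\<Sum>z\<in>OmegaQ n. symm n \<nu> z * g z)
      = (1 / fact n) * (\<Sum>z\<in>OmegaQ n. \<Sum>\<sigma>\<in>?S. \<nu> (permQ n \<sigma> z) * g z)"
    by (simp add: symm_def sum_distrib_left sum_distrib_right mult.assoc)
  also have "(\<Sum>z\<in>OmegaQ n. \<Sum>\<sigma>\<in>?S. \<nu> (permQ n \<sigma> z) * g z)
      = (\<Sum>\<sigma>\<in>?S. \<Sum>z\<in>OmegaQ n. \<nu> (permQ n \<sigma> z) * g z)"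
    by (rule sum.swap)
  also have "\<dots> = (\<Sum>\<sigma>\<in>?S. \<Sum>x\<in>OmegaQ n. \<nu> x * g (permQ n (inv \<sigma>) x))"
  proof (rule sum.cong[OF refl])
    fix \<sigma> assume "\<sigma> \<in> ?S"
    then have s: "\<sigma> permutes {..<n}" by simp
    show "(\<Sum>z\<in>OmegaQ n. \<nu> (permQ n \<sigma> z) * g z) = (\<Sum>x\<in>OmegaQ n. \<nu> x * g (permQ n (inv \<sigma>) x))"
      by (rule sum.reindex_bij_witness[of _ "permQ n (inv \<sigma>)" "permQ n \<sigma>"])
         (auto simp: permQ_permQ_inv[OF s] permQ_inv_permQ[OF s])
  qed
  finally show ?thesis .
qed

lemma symm_nonneg:
  assumes "\<And>x. x \<in> OmegaQ n \<Longrightarrow> 0 \<le> \<nu> x"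
  shows "0 \<le> symm n \<nu> z"
  unfolding symm_def using assms by (simp add: sum_nonneg)

lemma symm_total: "(\<Sum>z\<in>OmegaQ n. symm n \<nu> z) = (\<Sum>x\<in>OmegaQ n. \<nu> x)"
  using symm_pairing[of n \<nu> "\<lambda>_. 1"] by (simp add: card_permutations_lessThan)

section \<open>Path coupling on the level sets of the weight\<close>

text \<open>For \<open>x\<close> and \<open>y\<close> of equal weight, \<open>mismatch n x y\<close> is half their Hamming distance.\<close>

definition mismatch :: "nat \<Rightarrow> bool list \<Rightarrow> bool list \<Rightarrow> real" where
  "mismatch n x y = (\<Sum>a<n. if x ! a \<and> \<not> y ! a then 1 else 0)"

definition level_lipschitz :: "nat \<Rightarrow> real \<Rightarrow> (bool list \<Rightarrow> real) \<Rightarrow> bool" where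
  "level_lipschitz n L f \<longleftrightarrow>
     (\<forall>x\<in>OmegaQ n. \<forall>y\<in>OmegaQ n. weight n x = weight n y \<longrightarrow> \<bar>f x - f y\<bar> \<le> L * mismatch n x y)"

lemma mismatch_nonneg: "0 \<le> mismatch n x y"
  unfolding mismatch_def by (rule sum_nonneg) auto

lemma mismatch_le: "mismatch n x y \<le> real n"
  using sum_mono[of "{..<n}" "\<lambda>a. if x ! a \<and> \<not> y ! a then 1 else 0" "\<lambda>_. 1::real"]
  by (simp add: mismatch_def)

lemma mismatch_ge_1:
  assumes x: "x \<in> OmegaQ n" and y: "y \<in> OmegaQ n" and w: "weight n x = weight n y" and ne: "x \<noteq> y"
  shows "1 \<le> mismatch n x y"
proof (cases "\<exists>a<n. x ! a \<and> \<not> y ! a")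
  case True
  then obtain a where a: "a < n" "x ! a" "\<not> y ! a" by blast
  have "(if x ! a \<and> \<not> y ! a then 1 else 0::real) \<le> mismatch n x y"
    unfolding mismatch_def by (rule member_le_sum) (use a in auto)
  then show ?thesis using a by simp
next
  case False
  then have "{a. a < n \<and> x ! a} \<subseteq> {a. a < n \<and> y ! a}" by auto
  then have "{a. a < n \<and> x ! a} = {a. a < n \<and> y ! a}"
    by (rule card_subset_eq[rotated]) (use w in \<open>auto simp: weight_def\<close>)
  then have "x = y" using x y by (intro nth_equalityI) (auto simp: OmegaQ_def)
  with ne show ?thesis by simp
qed

lemma level_lipschitz_bounded:
  assumes "\<And>z. z \<in> OmegaQ n \<Longrightarrow> \<bar>f z\<bar> \<le> 1"
  shows "level_lipschitz n 2 f"
  unfolding level_lipschitz_def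
proof (intro ballI impI)
  fix x y assume x: "x \<in> OmegaQ n" and y: "y \<in> OmegaQ n" and w: "weight n x = weight n y"
  show "\<bar>f x - f y\<bar> \<le> 2 * mismatch n x y"
  proof (cases "x = y")
    case False
    have "\<bar>f x - f y\<bar> \<le> 2" using assms[OF x] assms[OF y] by linarith
    then show ?thesis using mismatch_ge_1[OF x y w False] by simp
  qed (simp add: mismatch_nonneg)
qed

text \<open>The coupling: an involution \<open>r\<close> moving \<open>x\<close> onto \<open>y\<close>, which pairs each position where only \<open>x\<close>
  has a one with a position where only \<open>y\<close> has a one and fixes all others.\<close>

lemma matching_involution:
  assumes x: "x \<in> OmegaQ n" and y: "y \<in> OmegaQ n" and w: "weight n x = weight n y"
  obtains r where "\<And>a. a < n \<Longrightarrow> r a < n" "\<And>a. a < n \<Longrightarrow> r (r a) = a"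
    "\<And>a. a < n \<Longrightarrow> y ! a = x ! r a" "\<And>a. a < n \<Longrightarrow> r a = a \<or> x ! a \<noteq> x ! r a"
proof -
  define P where "P = {a. a < n \<and> x ! a \<and> \<not> y ! a}"
  define Q where "Q = {a. a < n \<and> \<not> x ! a \<and> y ! a}"
  define B where "B = {a. a < n \<and> x ! a \<and> y ! a}"
  have "{a. a < n \<and> x ! a} = P \<union> B" "{a. a < n \<and> y ! a} = Q \<union> B"
    "P \<inter> B = {}" "Q \<inter> B = {}" "finite P" "finite Q" "finite B"
    unfolding P_def Q_def B_def by auto
  then have "card P = card Q"
    using w unfolding weight_def by (simp add: card_Un_disjoint)
  then obtain h where h: "bij_betw h P Q"
    using finite_same_card_bij \<open>finite P\<close> \<open>finite Q\<close> by blast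
  define r where "r a = (if a \<in> P then h a else if a \<in> Q then inv_into P h a else a)" for a
  have hP: "a \<in> P \<Longrightarrow> h a \<in> Q \<and> inv_into P h (h a) = a" for a
    using h by (auto simp: bij_betw_def inv_into_f_f)
  have hQ: "a \<in> Q \<Longrightarrow> inv_into P h a \<in> P \<and> h (inv_into P h a) = a" for a
    using h bij_betw_inv_into[OF h] by (auto simp: bij_betw_def f_inv_into_f)
  have PQ: "P \<inter> Q = {}" unfolding P_def Q_def by auto
  have cases: "(a \<in> P \<and> r a \<in> Q \<or> a \<in> Q \<and> r a \<in> P) \<and> r (r a) = a \<or> a \<notin> P \<and> a \<notin> Q \<and> r a = a"
    for a
    using hP[of a] hQ[of a] PQ unfolding r_def by auto
  show ?thesis
  proof
    fix a assume a: "a < n"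
    from cases[of a] show "r a < n" "r (r a) = a" "y ! a = x ! r a" "r a = a \<or> x ! a \<noteq> x ! r a"
      using a by (auto simp: P_def Q_def)
  qed
qed

lemma transpose_conj_involution:
  assumes r: "\<And>a. a < n \<Longrightarrow> r (r a) = a" and ij: "i < n" "j < n" and a: "a < n"
  shows "r (Transposition.transpose (r i) (r j) a) = Transposition.transpose i j (r a)"
  using r[OF ij(1)] r[OF ij(2)] r[OF a] by (auto simp: Transposition.transpose_def)

lemma sum_involution_reindex:
  fixes g :: "nat \<Rightarrow> real"
  assumes "\<And>a. a < n \<Longrightarrow> r a < n" "\<And>a. a < n \<Longrightarrow> r (r a) = a"
  shows "(\<Sum>a<n. g (r a)) = (\<Sum>a<n. g a)"
  by (rule sum.reindex_bij_witness[of _ r r]) (use assms in auto)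

lemma sum_transpose_pair_mismatch:
  assumes n: "2 \<le> n" and ab: "a < n" "b < n" and x: "b = a \<or> x ! a \<noteq> x ! b"
  defines "F \<equiv> \<lambda>c e. (if x ! c \<and> \<not> x ! e then 1 else 0::real)"
  shows "(\<Sum>i<n. \<Sum>j<n. F (Transposition.transpose i j a) (Transposition.transpose i j b))
       = (real n ^ 2 - 2 * real n + 2) * F a b + 2 * F b a"
proof (cases "b = a")
  case False
  then have ab': "a < n" "b < n" "a \<noteq> b" and xab: "x ! a \<noteq> x ! b" using ab x by auto
  have "(\<Sum>c\<in>{..<n}-{a,b}. F c b + F a c) = (\<Sum>c\<in>{..<n}-{a,b}. if x ! a then 1 else 0)"
    by (rule sum.cong) (use xab in \<open>auto simp: F_def\<close>)
  also have "\<dots> = (if x ! a then real n - 2 else 0)"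
    using ab' by (simp add: card_Diff_subset of_nat_diff)
  finally have "(\<Sum>c\<in>{..<n}-{a,b}. F c b + F a c) = (if x ! a then real n - 2 else 0)" .
  with sum_transpose_pair[OF ab', of F] xab show ?thesis
    by (cases "x ! a") (simp_all add: F_def power2_eq_square algebra_simps)
qed (simp add: F_def)

lemma coupled_swaps_mismatch_sum:
  assumes n: "2 \<le> n" and x: "x \<in> OmegaQ n" and y: "y \<in> OmegaQ n"
    and r_less: "\<And>a. a < n \<Longrightarrow> r a < n" and r_r: "\<And>a. a < n \<Longrightarrow> r (r a) = a"
    and r_y: "\<And>a. a < n \<Longrightarrow> y ! a = x ! r a" and r_x: "\<And>a. a < n \<Longrightarrow> r a = a \<or> x ! a \<noteq> x ! r a"
  shows "(\<Sum>i<n. \<Sum>j<n. mismatch n (swapQ i j x) (swapQ (r i) (r j) y))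
       = (real n ^ 2 - 2 * real n + 4) * mismatch n x y"
proof -
  define F where "F \<equiv> \<lambda>c e. (if x ! c \<and> \<not> x ! e then 1 else 0::real)"
  let ?tr = "Transposition.transpose"
  have len: "length x = n" "length y = n" using x y by (auto simp: OmegaQ_def)
  have swapped: "mismatch n (swapQ i j x) (swapQ (r i) (r j) y) = (\<Sum>a<n. F (?tr i j a) (?tr i j (r a)))"
    if ij: "i < n" "j < n" for i j
    unfolding mismatch_def
  proof (rule sum.cong[OF refl])
    fix a assume "a \<in> {..<n}"
    then have a: "a < n" by simp
    have "?tr (r i) (r j) a < n" using a ij r_less by (simp add: Transposition.transpose_def)
    then have "swapQ (r i) (r j) y ! a = x ! ?tr i j (r a)"
      using a ij len r_less by (simp add: nth_swapQ r_y transpose_conj_involution[OF r_r ij a])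
    then show "(if swapQ i j x ! a \<and> \<not> swapQ (r i) (r j) y ! a then 1 else 0) = F (?tr i j a) (?tr i j (r a))"
      using a ij len by (simp add: F_def nth_swapQ)
  qed
  have "(\<Sum>i<n. \<Sum>j<n. mismatch n (swapQ i j x) (swapQ (r i) (r j) y))
      = (\<Sum>i<n. \<Sum>j<n. \<Sum>a<n. F (?tr i j a) (?tr i j (r a)))"
    by (simp add: swapped)
  also have "\<dots> = (\<Sum>a<n. \<Sum>i<n. \<Sum>j<n. F (?tr i j a) (?tr i j (r a)))"
    by (subst sum.swap, subst (2) sum.swap) (rule refl)
  also have "\<dots> = (\<Sum>a<n. (real n ^ 2 - 2 * real n + 2) * F a (r a) + 2 * F (r a) a)"
    using sum_transpose_pair_mismatch[OF n] r_less r_x unfolding F_def by simp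
  also have "\<dots> = (real n ^ 2 - 2 * real n + 2) * (\<Sum>a<n. F a (r a)) + 2 * (\<Sum>a<n. F (r a) a)"
    by (simp add: sum.distrib sum_distrib_left)
  also have "(\<Sum>a<n. F (r a) a) = (\<Sum>a<n. F a (r a))"
    using sum_involution_reindex[OF r_less r_r, of "\<lambda>b. F b (r b)"] r_r by simp
  also have "(\<Sum>a<n. F a (r a)) = mismatch n x y"
    unfolding mismatch_def F_def by (simp add: r_y)
  finally show ?thesis by (simp add: algebra_simps)
qed

definition contraction_rate :: "nat \<Rightarrow> real" where
  "contraction_rate n = (real n ^ 2 - 2 * real n + 4) / real n ^ 2"

lemma contraction_rate_nonneg: "0 \<le> contraction_rate n"
proof -
  have "0 \<le> (real n - 1)^2 + 3" by simp
  then show ?thesis by (simp add: contraction_rate_def power2_eq_square algebra_simps)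
qed

lemma contraction_rate_less_1: "3 \<le> n \<Longrightarrow> contraction_rate n < 1"
  by (simp add: contraction_rate_def power2_eq_square field_simps)

lemma level_lipschitz_Tact:
  assumes n: "2 \<le> n" and L: "0 \<le> L" and f: "level_lipschitz n L f"
  shows "level_lipschitz n (contraction_rate n * L) (Tact n f)"
  unfolding level_lipschitz_def
proof (intro ballI impI)
  fix x y assume x: "x \<in> OmegaQ n" and y: "y \<in> OmegaQ n" and w: "weight n x = weight n y"
  obtain r where r_less: "\<And>a. a < n \<Longrightarrow> r a < n" and r_r: "\<And>a. a < n \<Longrightarrow> r (r a) = a"
    and r_y: "\<And>a. a < n \<Longrightarrow> y ! a = x ! r a" and r_x: "\<And>a. a < n \<Longrightarrow> r a = a \<or> x ! a \<noteq> x ! r a"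
    using matching_involution[OF x y w] by blast
  let ?d = "\<lambda>i j. f (swapQ i j x) - f (swapQ (r i) (r j) y)"
  have "(\<Sum>i<n. \<Sum>j<n. f (swapQ (r i) (r j) y)) = (\<Sum>i<n. \<Sum>j<n. f (swapQ (r i) j y))"
    by (rule sum.cong[OF refl]) (rule sum_involution_reindex[OF r_less r_r])
  also have "\<dots> = (\<Sum>i<n. \<Sum>j<n. f (swapQ i j y))"
    by (rule sum_involution_reindex[OF r_less r_r, of "\<lambda>i. \<Sum>j<n. f (swapQ i j y)"])
  finally have "Tact n f x - Tact n f y = (\<Sum>i<n. \<Sum>j<n. ?d i j) / real n ^ 2"
    by (simp add: Tact_eq_swap_average[OF n x] Tact_eq_swap_average[OF n y] sum_subtractf
        diff_divide_distrib)
  moreover have "\<bar>\<Sum>i<n. \<Sum>j<n. ?d i j\<bar> \<le> (\<Sum>i<n. \<Sum>j<n. \<bar>?d i j\<bar>)"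
    by (rule order_trans[OF sum_abs]) (intro sum_mono sum_abs)
  moreover have "\<bar>?d i j\<bar> \<le> L * mismatch n (swapQ i j x) (swapQ (r i) (r j) y)"
    if "i \<in> {..<n}" "j \<in> {..<n}" for i j
    using f x y r_less that by (simp add: level_lipschitz_def weight_swapQ w)
  then have "(\<Sum>i<n. \<Sum>j<n. \<bar>?d i j\<bar>)
      \<le> (\<Sum>i<n. \<Sum>j<n. L * mismatch n (swapQ i j x) (swapQ (r i) (r j) y))"
    by (intro sum_mono)
  ultimately have "\<bar>Tact n f x - Tact n f y\<bar>
      \<le> (\<Sum>i<n. \<Sum>j<n. L * mismatch n (swapQ i j x) (swapQ (r i) (r j) y)) / real n ^ 2"
    by (simp add: divide_right_mono)
  also have "\<dots> = contraction_rate n * L * mismatch n x y"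
    by (simp add: sum_distrib_left[symmetric] contraction_rate_def
        coupled_swaps_mismatch_sum[OF n x y r_less r_r r_y r_x])
  finally show "\<bar>Tact n f x - Tact n f y\<bar> \<le> contraction_rate n * L * mismatch n x y" .
qed

lemma level_lipschitz_Tact_iter:
  assumes n: "2 \<le> n" and L: "0 \<le> L" and f: "level_lipschitz n L f"
  shows "level_lipschitz n (contraction_rate n ^ t * L) ((Tact n ^^ t) f)"
proof (induction t)
  case (Suc t)
  have "0 \<le> contraction_rate n ^ t * L" using L contraction_rate_nonneg by simp
  from level_lipschitz_Tact[OF n this Suc] show ?case by (simp add: mult.assoc)
qed (simp add: f)

text \<open>For \<open>n = 2\<close> the contraction rate is 1, but a single step already forgets the order of the
  coordinates.\<close>

lemma OmegaQ_2_same_weight: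
  assumes "x \<in> OmegaQ 2" "y \<in> OmegaQ 2" "weight 2 x = weight 2 y"
  shows "y = x \<or> y = swapQ 0 1 x"
proof -
  obtain a b where x: "x = [a, b]" using assms(1) unfolding OmegaQ_def
    by (auto simp: length_Suc_conv numeral_2_eq_2)
  obtain c d where y: "y = [c, d]" using assms(2) unfolding OmegaQ_def
    by (auto simp: length_Suc_conv numeral_2_eq_2)
  have "real (weight 2 [a, b]) = real (weight 2 [c, d])" using assms(3) x y by simp
  then have "bitval [a, b] 0 + bitval [a, b] 1 = bitval [c, d] 0 + bitval [c, d] 1"
    by (simp add: weight_eq_sum_bitval numeral_2_eq_2 lessThan_Suc)
  then show ?thesis unfolding x y swapQ_def by (cases a; cases b; cases c; cases d) (auto simp: bitval_def)
qed

lemma level_lipschitz_Tact_2: "level_lipschitz 2 0 (Tact 2 f)"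
  unfolding level_lipschitz_def
proof (intro ballI impI)
  fix x y assume x: "x \<in> OmegaQ 2" and y: "y \<in> OmegaQ 2" and w: "weight 2 x = weight 2 y"
  have swap10: "swapQ 1 0 z = swapQ 0 1 z" if "z \<in> OmegaQ 2" for z
    using that unfolding swapQ_def OmegaQ_def by (auto simp: list_update_swap)
  have T: "Tact 2 f z = (f z + f (swapQ 0 1 z)) / 2" if z: "z \<in> OmegaQ 2" for z
    using Tact_eq_swap_average[of 2 z f] z swap10[OF z] by (simp add: numeral_2_eq_2 lessThan_Suc)
  have "Tact 2 f (swapQ 0 1 x) = Tact 2 f x"
    using T[of x] T[of "swapQ 0 1 x"] x swapQ_swapQ[OF x, of 0 1] by simp
  then show "\<bar>Tact 2 f x - Tact 2 f y\<bar> \<le> 0 * mismatch 2 x y"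
    using OmegaQ_2_same_weight[OF x y w] by auto
qed

section \<open>Upper bound on the distance to \<open>\<nu> S\<close>\<close>

text \<open>Both \<open>\<nu> T\<^sup>t\<close> and \<open>\<nu> S\<close> integrate \<open>T\<^sup>t f\<close> (the latter because \<open>\<nu> S\<close> is \<open>T\<close>-invariant), but
  \<open>\<nu> S\<close> does so at a random permutation of the starting point, which has the same weight.\<close>

lemma pairing_evol_symm_le:
  assumes n: "2 \<le> n" and \<nu>: "is_dist n \<nu>" and L: "0 \<le> L"
    and lip: "level_lipschitz n L ((Tact n ^^ t) f)"
  shows "\<bar>\<Sum>z\<in>OmegaQ n. (evol n \<nu> t z - symm n \<nu> z) * f z\<bar> \<le> L * real n"
proof -
  let ?S = "{\<sigma>. \<sigma> permutes {..<n}}"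
  define g where "g = (Tact n ^^ t) f"
  have \<nu>_nonneg: "\<And>x. x \<in> OmegaQ n \<Longrightarrow> 0 \<le> \<nu> x" and \<nu>_total: "(\<Sum>x\<in>OmegaQ n. \<nu> x) = 1"
    using \<nu> unfolding is_dist_def by auto
  have "(\<Sum>z\<in>OmegaQ n. evol n \<nu> t z * f z) = (1 / fact n) * (\<Sum>\<sigma>\<in>?S. \<Sum>x\<in>OmegaQ n. \<nu> x * g x)"
    by (simp add: evol_pairing card_permutations_lessThan g_def)
  moreover have "(\<Sum>z\<in>OmegaQ n. symm n \<nu> z * f z)
      = (1 / fact n) * (\<Sum>\<sigma>\<in>?S. \<Sum>x\<in>OmegaQ n. \<nu> x * g (permQ n (inv \<sigma>) x))"
    using symm_pairing_Tact_iter[OF n, of \<nu> t f] symm_pairing[of n \<nu> g] by (simp add: g_def)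
  ultimately have "(\<Sum>z\<in>OmegaQ n. (evol n \<nu> t z - symm n \<nu> z) * f z)
      = (1 / fact n) * (\<Sum>\<sigma>\<in>?S. \<Sum>x\<in>OmegaQ n. \<nu> x * (g x - g (permQ n (inv \<sigma>) x)))"
    by (simp add: left_diff_distrib right_diff_distrib sum_subtractf)
  also have "\<bar>\<dots>\<bar> \<le> (1 / fact n) * (\<Sum>\<sigma>\<in>?S. \<Sum>x\<in>OmegaQ n. \<nu> x * (L * real n))"
  proof -
    have "\<bar>\<nu> x * (g x - g (permQ n (inv \<sigma>) x))\<bar> \<le> \<nu> x * (L * real n)"
      if "\<sigma> \<in> ?S" "x \<in> OmegaQ n" for \<sigma> x
    proof -
      have "inv \<sigma> permutes {..<n}" using that(1) permutes_inv by auto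
      then have "\<bar>g x - g (permQ n (inv \<sigma>) x)\<bar> \<le> L * mismatch n x (permQ n (inv \<sigma>) x)"
        using lip that(2) weight_permQ unfolding level_lipschitz_def g_def by simp
      also have "\<dots> \<le> L * real n" using L mismatch_le by (simp add: mult_left_mono)
      finally show ?thesis using \<nu>_nonneg[OF that(2)] by (simp add: abs_mult mult_left_mono)
    qed
    then have "\<bar>\<Sum>\<sigma>\<in>?S. \<Sum>x\<in>OmegaQ n. \<nu> x * (g x - g (permQ n (inv \<sigma>) x))\<bar>
        \<le> (\<Sum>\<sigma>\<in>?S. \<Sum>x\<in>OmegaQ n. \<nu> x * (L * real n))"
      by (intro order_trans[OF sum_abs] sum_mono order_trans[OF sum_abs]) simp
    from mult_left_mono[OF this, of "1 / fact n"] show ?thesis by (simp add: abs_mult)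
  qed
  also have "\<dots> = L * real n"
    by (simp add: sum_distrib_right[symmetric] \<nu>_total card_permutations_lessThan)
  finally show ?thesis .
qed

lemma tv_le_of_pairing_le:
  fixes \<mu> \<pi> :: "bool list \<Rightarrow> real"
  assumes "\<And>s. (\<And>z. z \<in> OmegaQ n \<Longrightarrow> \<bar>s z\<bar> \<le> 1) \<Longrightarrow> \<bar>\<Sum>z\<in>OmegaQ n. (\<mu> z - \<pi> z) * s z\<bar> \<le> K"
  shows "tv n \<mu> \<pi> \<le> K / 2"
proof -
  define s where "s z = sgn (\<mu> z - \<pi> z)" for z
  have "(\<Sum>q\<in>OmegaQ n. \<bar>\<mu> q - \<pi> q\<bar>) = (\<Sum>z\<in>OmegaQ n. (\<mu> z - \<pi> z) * s z)"
    by (rule sum.cong) (auto simp: s_def abs_sgn mult.commute)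
  also have "\<dots> \<le> K" using assms[of s] by (auto simp: s_def abs_sgn_eq)
  finally show ?thesis by (simp add: tv_def)
qed

lemma tv_evol_symm_le:
  assumes n: "2 \<le> n" and \<nu>: "is_dist n \<nu>"
  shows "tv n (evol n \<nu> t) (symm n \<nu>) \<le> contraction_rate n ^ t * real n"
proof -
  have "tv n (evol n \<nu> t) (symm n \<nu>) \<le> (contraction_rate n ^ t * 2 * real n) / 2"
  proof (rule tv_le_of_pairing_le)
    fix s :: "bool list \<Rightarrow> real" assume "\<And>z. z \<in> OmegaQ n \<Longrightarrow> \<bar>s z\<bar> \<le> 1"
    then have "level_lipschitz n (contraction_rate n ^ t * 2) ((Tact n ^^ t) s)"
      by (intro level_lipschitz_Tact_iter[OF n] level_lipschitz_bounded) simp_all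
    with pairing_evol_symm_le[OF n \<nu>] contraction_rate_nonneg
    show "\<bar>\<Sum>z\<in>OmegaQ n. (evol n \<nu> t z - symm n \<nu> z) * s z\<bar> \<le> contraction_rate n ^ t * 2 * real n"
      by simp
  qed
  then show ?thesis by simp
qed

lemma tv_evol_symm_2:
  assumes \<nu>: "is_dist 2 \<nu>"
  shows "tv 2 (evol 2 \<nu> (Suc t)) (symm 2 \<nu>) \<le> 0"
proof -
  have "tv 2 (evol 2 \<nu> (Suc t)) (symm 2 \<nu>) \<le> 0 / 2"
  proof (rule tv_le_of_pairing_le)
    fix s :: "bool list \<Rightarrow> real"
    have "level_lipschitz 2 (contraction_rate 2 ^ t * 0) ((Tact 2 ^^ t) (Tact 2 s))"
      by (rule level_lipschitz_Tact_iter[OF _ _ level_lipschitz_Tact_2]) simp_all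
    then have "level_lipschitz 2 0 ((Tact 2 ^^ Suc t) s)"
      by (simp add: funpow_Suc_right del: funpow.simps)
    then show "\<bar>\<Sum>z\<in>OmegaQ 2. (evol 2 \<nu> (Suc t) z - symm 2 \<nu> z) * s z\<bar> \<le> 0"
      using pairing_evol_symm_le[of 2 \<nu> 0 "Suc t" s] \<nu> by (simp del: matpow.simps)
  qed
  then show ?thesis by simp
qed

lemma tv_evol_symm_tendsto_0:
  assumes n: "2 \<le> n" and \<nu>: "is_dist n \<nu>"
  shows "(\<lambda>t. tv n (evol n \<nu> t) (symm n \<nu>)) \<longlonglongrightarrow> 0"
proof -
  have tv_nonneg: "0 \<le> tv n \<mu> \<pi>" for \<mu> \<pi> by (simp add: tv_def sum_nonneg)
  show ?thesis
  proof (cases "n = 2")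
    case True
    have "\<forall>\<^sub>F t in sequentially. tv n (evol n \<nu> t) (symm n \<nu>) = 0"
      unfolding eventually_sequentially
    proof (intro exI allI impI)
      fix t :: nat assume "1 \<le> t"
      then obtain s where "t = Suc s" by (cases t) auto
      then show "tv n (evol n \<nu> t) (symm n \<nu>) = 0"
        using tv_evol_symm_2[of \<nu> s] tv_nonneg \<nu> True by (simp add: order.antisym)
    qed
    then show ?thesis by (rule tendsto_eventually)
  next
    case False
    then have "contraction_rate n < 1" using n by (intro contraction_rate_less_1) simp
    then have "(\<lambda>t. contraction_rate n ^ t * real n) \<longlonglongrightarrow> 0"
      by (intro tendsto_mult_left_zero LIMSEQ_power_zero) (simp add: contraction_rate_nonneg)
    then show ?thesis
      by (rule Lim_null_comparison[rotated]) (simp add: tv_nonneg tv_evol_symm_le[OF n \<nu>])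
  qed
qed

lemma abs_diff_le_tv: "q \<in> OmegaQ n \<Longrightarrow> \<bar>\<mu> q - \<pi> q\<bar> \<le> 2 * tv n \<mu> \<pi>"
  using member_le_sum[of q "OmegaQ n" "\<lambda>q. \<bar>\<mu> q - \<pi> q\<bar>"] by (simp add: tv_def)

lemma evol_tendsto_symm:
  assumes n: "2 \<le> n" and \<nu>: "is_dist n \<nu>" and q: "q \<in> OmegaQ n"
  shows "(\<lambda>t. evol n \<nu> t q) \<longlonglongrightarrow> symm n \<nu> q"
proof -
  have "(\<lambda>t. 2 * tv n (evol n \<nu> t) (symm n \<nu>)) \<longlonglongrightarrow> 0"
    using tendsto_mult_right_zero[OF tv_evol_symm_tendsto_0[OF n \<nu>]] by simp
  then have "(\<lambda>t. evol n \<nu> t q - symm n \<nu> q) \<longlonglongrightarrow> 0"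
    by (rule Lim_null_comparison[rotated]) (simp add: abs_diff_le_tv[OF q])
  then show ?thesis by (simp add: LIM_zero_iff)
qed

section \<open>Wilson's eigenfunction\<close>

definition prefix_deviation :: "nat \<Rightarrow> nat \<Rightarrow> bool list \<Rightarrow> real" where
  "prefix_deviation n k q = (\<Sum>a<k. bitval q a) - real k * real (weight n q) / real n"

lemma bitval_swapQ:
  "q \<in> OmegaQ n \<Longrightarrow> i < n \<Longrightarrow> j < n \<Longrightarrow> a < n \<Longrightarrow>
    bitval (swapQ i j q) a = bitval q (Transposition.transpose i j a)"
  by (simp add: bitval_def nth_swapQ OmegaQ_def)

lemma Tact_weight_fun:
  assumes n: "2 \<le> n" and q: "q \<in> OmegaQ n"
  shows "Tact n (\<lambda>z. g (weight n z)) q = g (weight n q)"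
  using n q by (simp add: Tact_eq_swap_average weight_swapQ power2_eq_square)

lemma Tact_bit:
  assumes n: "2 \<le> n" and q: "q \<in> OmegaQ n" and a: "a < n"
  shows "Tact n (\<lambda>z. bitval z a) q = (1 - 2 / real n) * bitval q a + 2 * real (weight n q) / real n ^ 2"
proof -
  have "(\<Sum>i<n. \<Sum>j<n. bitval (swapQ i j q) a) = (\<Sum>i<n. \<Sum>j<n. bitval q (Transposition.transpose i j a))"
    using q a by (simp add: bitval_swapQ)
  also have "\<dots> = (real n ^ 2 - 2 * real n) * bitval q a + 2 * real (weight n q)"
    by (simp add: sum_transpose_point[OF n a] weight_eq_sum_bitval)
  finally show ?thesis
    using n by (simp add: Tact_eq_swap_average[OF n q] field_simps power2_eq_square)
qed

lemma Tact_prefix_deviation: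
  assumes n: "2 \<le> n" and q: "q \<in> OmegaQ n" and k: "k \<le> n"
  shows "Tact n (prefix_deviation n k) q = (1 - 2 / real n) * prefix_deviation n k q"
proof -
  have "Tact n (prefix_deviation n k) q
      = (\<Sum>a<k. Tact n (\<lambda>z. bitval z a) q) - real k / real n * Tact n (\<lambda>z. real (weight n z)) q"
    using Tact_linear[of n 1 "\<lambda>z. \<Sum>a<k. bitval z a" "- (real k / real n)" "\<lambda>z. real (weight n z)" q]
    by (simp add: prefix_deviation_def[abs_def] Tact_sum)
  also have "\<dots> = (\<Sum>a<k. (1 - 2 / real n) * bitval q a + 2 * real (weight n q) / real n ^ 2)
      - real k / real n * real (weight n q)"
    using k by (simp add: Tact_bit[OF n q] Tact_weight_fun[OF n q])
  also have "\<dots> = (1 - 2 / real n) * (\<Sum>a<k. bitval q a) + real k * (2 * real (weight n q) / real n ^ 2)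
      - real k / real n * real (weight n q)"
    by (simp add: sum.distrib sum_distrib_left)
  also have "\<dots> = (1 - 2 / real n) * prefix_deviation n k q"
    using n by (simp add: prefix_deviation_def field_simps power2_eq_square)
  finally show ?thesis .
qed

lemma prefix_deviation_swapQ:
  assumes q: "q \<in> OmegaQ n" and ij: "i < n" "j < n" and k: "k \<le> n"
  shows "\<bar>prefix_deviation n k (swapQ i j q) - prefix_deviation n k q\<bar> \<le> 1"
proof -
  define D where "D a = bitval q (Transposition.transpose i j a) - bitval q a" for a
  have "prefix_deviation n k (swapQ i j q) - prefix_deviation n k q = (\<Sum>a<k. D a)"
    using q ij k by (simp add: prefix_deviation_def weight_swapQ bitval_swapQ D_def sum_subtractf)
  also have "\<dots> = (\<Sum>a\<in>{..<k} \<inter> {i,j}. D a)"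
    by (rule sum.mono_neutral_right) (auto simp: D_def)
  finally have eq: "prefix_deviation n k (swapQ i j q) - prefix_deviation n k q = (\<Sum>a\<in>{..<k} \<inter> {i,j}. D a)" .
  have D: "D i = bitval q j - bitval q i" "D j = bitval q i - bitval q j"
    and bitval_bounds: "0 \<le> bitval q a" "bitval q a \<le> 1" for a
    by (auto simp: D_def bitval_def)
  show ?thesis
  proof (cases "i = j")
    case False
    then consider "{..<k} \<inter> {i,j} = {i,j}" | "{..<k} \<inter> {i,j} = {i}" | "{..<k} \<inter> {i,j} = {j}"
      | "{..<k} \<inter> {i,j} = {}"
      by auto
    then show ?thesis
      by cases (use eq D bitval_bounds[of i] bitval_bounds[of j] False in simp_all)
  qed (simp add: eq D_def)
qed

text \<open>A swap moves \<open>Y := prefix_deviation n k\<close> by at most one, so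
  \<open>T(Y\<^sup>2) \<le> 2 Y TY + 1 - Y\<^sup>2 = (1 - 4/n) Y\<^sup>2 + 1\<close>.\<close>

lemma Tact_prefix_deviation_sq_le:
  assumes n: "2 \<le> n" and q: "q \<in> OmegaQ n" and k: "k \<le> n"
  shows "Tact n (\<lambda>z. (prefix_deviation n k z)^2) q \<le> (1 - 4 / real n) * (prefix_deviation n k q)^2 + 1"
proof -
  define Y where "Y = prefix_deviation n k"
  have each: "(Y (swapQ i j q))^2 \<le> (1 - (Y q)^2) + 2 * Y q * Y (swapQ i j q)"
    if "i < n" "j < n" for i j
  proof -
    have "(Y (swapQ i j q) - Y q)^2 \<le> 1"
      using prefix_deviation_swapQ[OF q that k] by (simp add: Y_def abs_square_le_1)
    then show ?thesis by (simp add: power2_eq_square algebra_simps)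
  qed
  have "Tact n (\<lambda>z. (Y z)^2) q \<le> Tact n (\<lambda>z. (1 - (Y q)^2) * 1 + 2 * Y q * Y z) q"
    using n q each by (simp add: Tact_eq_swap_average) (intro divide_right_mono sum_mono, auto)
  also have "\<dots> = (1 - (Y q)^2) + 2 * Y q * ((1 - 2 / real n) * Y q)"
    using Tact_linear[of n "1 - (Y q)^2" "\<lambda>_. 1" "2 * Y q" Y q]
    by (simp add: Tact_const[OF n q] Tact_prefix_deviation[OF n q k] Y_def)
  also have "\<dots> = (1 - 4 / real n) * (Y q)^2 + 1"
    by (simp add: algebra_simps power2_eq_square)
  finally show ?thesis by (simp add: Y_def)
qed

lemma Tact_iter_prefix_deviation:
  assumes n: "2 \<le> n" and k: "k \<le> n"
  shows "q \<in> OmegaQ n \<Longrightarrow> (Tact n ^^ t) (prefix_deviation n k) q = (1 - 2 / real n)^t * prefix_deviation n k q"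
proof (induction t arbitrary: q)
  case (Suc t)
  have "(Tact n ^^ Suc t) (prefix_deviation n k) q
      = Tact n (\<lambda>z. (1 - 2 / real n)^t * prefix_deviation n k z) q"
    unfolding funpow.simps o_apply by (rule Tact_cong) (rule Suc.IH)
  then show ?case by (simp add: Tact_scale Tact_prefix_deviation[OF n Suc.prems k])
qed simp

lemma Tact_iter_prefix_deviation_sq_le:
  assumes n: "4 \<le> n" and k: "k \<le> n" and q: "q \<in> OmegaQ n"
  shows "(Tact n ^^ t) (\<lambda>z. (prefix_deviation n k z)^2) q
    \<le> (1 - 4 / real n)^t * (prefix_deviation n k q)^2 + real n / 4"
proof (induction t)
  case (Suc t)
  define \<alpha> where "\<alpha> = 1 - 4 / real n"
  have \<alpha>: "0 \<le> \<alpha>" using n by (simp add: \<alpha>_def field_simps)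
  have n2: "2 \<le> n" using n by simp
  have "(Tact n ^^ Suc t) (\<lambda>z. (prefix_deviation n k z)^2) q
      = (Tact n ^^ t) (Tact n (\<lambda>z. (prefix_deviation n k z)^2)) q"
    by (simp add: funpow_Suc_right del: funpow.simps)
  also have "\<dots> \<le> (Tact n ^^ t) (\<lambda>z. \<alpha> * (prefix_deviation n k z)^2 + 1 * 1) q"
    by (rule Tact_iter_mono[OF n2 q]) (simp add: Tact_prefix_deviation_sq_le[OF n2 _ k] \<alpha>_def)
  also have "\<dots> = \<alpha> * (Tact n ^^ t) (\<lambda>z. (prefix_deviation n k z)^2) q + 1"
    using Tact_iter_linear[OF q, of t \<alpha> "\<lambda>z. (prefix_deviation n k z)^2" 1 "\<lambda>_. 1"]
    by (simp add: Tact_iter_const[OF n2 q])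
  also have "\<dots> \<le> \<alpha> * ((1 - 4 / real n)^t * (prefix_deviation n k q)^2 + real n / 4) + 1"
    using Suc \<alpha> by (simp add: mult_left_mono)
  also have "\<dots> = (1 - 4 / real n)^Suc t * (prefix_deviation n k q)^2 + real n / 4"
    using n by (simp add: \<alpha>_def field_simps)
  finally show ?case .
qed (use n in simp)

section \<open>Lower bound on the distance to \<open>\<nu> S\<close>\<close>

definition point_mass :: "bool list \<Rightarrow> bool list \<Rightarrow> real" where
  "point_mass x = (\<lambda>y. if y = x then 1 else 0)"

lemma point_mass_is_dist: "x \<in> OmegaQ n \<Longrightarrow> is_dist n (point_mass x)"
  unfolding is_dist_def point_mass_def by auto

lemma evol_point_mass_pairing:
  assumes x: "x \<in> OmegaQ n"
  shows "(\<Sum>z\<in>OmegaQ n. evol n (point_mass x) t z * f z) = (Tact n ^^ t) f x"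
proof -
  have "(\<Sum>y\<in>OmegaQ n. point_mass x y * (Tact n ^^ t) f y)
      = (\<Sum>y\<in>OmegaQ n. if x = y then (Tact n ^^ t) f x else 0)"
    by (rule sum.cong) (auto simp: point_mass_def)
  then show ?thesis using x by (simp add: evol_pairing)
qed

lemma Tact_iter_square_deviation:
  assumes n: "2 \<le> n" and q: "q \<in> OmegaQ n"
  shows "(Tact n ^^ t) (\<lambda>y. (g y - m)^2) q = (Tact n ^^ t) (\<lambda>y. (g y)^2) q - 2 * m * (Tact n ^^ t) g q + m^2"
proof -
  have eq: "(\<lambda>y. (g y - m)^2) = (\<lambda>y. 1 * (g y)^2 + 1 * ((- 2 * m) * g y + m^2 * 1))"
    by (simp add: fun_eq_iff power2_eq_square algebra_simps)
  show ?thesis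
    unfolding eq
    unfolding Tact_iter_linear[OF q] Tact_iter_const[OF n q] by (simp add: algebra_simps)
qed

lemma tv_ge_pairing:
  fixes \<mu> \<pi> h :: "bool list \<Rightarrow> real"
  assumes "(\<Sum>z\<in>OmegaQ n. \<mu> z) = (\<Sum>z\<in>OmegaQ n. \<pi> z)" and "\<And>z. 0 \<le> h z" "\<And>z. h z \<le> 1"
  shows "(\<Sum>z\<in>OmegaQ n. (\<mu> z - \<pi> z) * h z) \<le> tv n \<mu> \<pi>"
proof -
  have "(\<Sum>z\<in>OmegaQ n. (\<mu> z - \<pi> z) * h z) = (\<Sum>z\<in>OmegaQ n. (\<mu> z - \<pi> z) * (h z - 1/2))"
    using assms(1) by (simp add: algebra_simps sum.distrib sum_subtractf sum_divide_distrib[symmetric])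
  also have "\<dots> \<le> (\<Sum>z\<in>OmegaQ n. \<bar>\<mu> z - \<pi> z\<bar> * (1/2))"
  proof (rule sum_mono)
    fix z
    have "\<bar>h z - 1/2\<bar> \<le> 1/2" using assms(2,3)[of z] by linarith
    then have "\<bar>\<mu> z - \<pi> z\<bar> * \<bar>h z - 1/2\<bar> \<le> \<bar>\<mu> z - \<pi> z\<bar> * (1/2)" by (rule mult_left_mono) simp
    then show "(\<mu> z - \<pi> z) * (h z - 1/2) \<le> \<bar>\<mu> z - \<pi> z\<bar> * (1/2)"
      by (metis abs_ge_self abs_mult order_trans)
  qed
  also have "\<dots> = tv n \<mu> \<pi>" by (simp add: tv_def sum_distrib_right)
  finally show ?thesis .
qed

lemma pairing_le_tv:
  fixes \<mu> \<pi> h :: "bool list \<Rightarrow> real"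
  assumes "\<And>z. z \<in> OmegaQ n \<Longrightarrow> \<bar>h z\<bar> \<le> M"
  shows "\<bar>\<Sum>z\<in>OmegaQ n. (\<mu> z - \<pi> z) * h z\<bar> \<le> 2 * M * tv n \<mu> \<pi>"
proof -
  have "\<bar>\<Sum>z\<in>OmegaQ n. (\<mu> z - \<pi> z) * h z\<bar> \<le> (\<Sum>z\<in>OmegaQ n. \<bar>\<mu> z - \<pi> z\<bar> * M)"
    by (rule order_trans[OF sum_abs], rule sum_mono) (simp add: abs_mult assms mult_left_mono)
  also have "\<dots> = 2 * M * tv n \<mu> \<pi>" by (simp add: tv_def sum_distrib_right[symmetric])
  finally show ?thesis .
qed

definition half_ones :: "nat \<Rightarrow> bool list" where
  "half_ones n = replicate (n div 2) True @ replicate (n - n div 2) False"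

lemma half_ones_in_OmegaQ: "half_ones n \<in> OmegaQ n"
  by (simp add: half_ones_def OmegaQ_def)

lemma exp_minus_two_mult_le:
  fixes x :: real
  assumes "0 \<le> x" "x \<le> 1/2"
  shows "exp (- 2 * x) \<le> 1 - x"
proof -
  have "x * x \<le> x * (1/2)" using assms by (intro mult_left_mono) simp_all
  then have "- 2 * x \<le> - x - 2 * x^2" by (simp add: power2_eq_square)
  also have "\<dots> \<le> ln (1 - x)" by (rule ln_one_minus_pos_lower_bound[OF assms])
  finally show ?thesis using assms by (simp add: ln_ge_iff)
qed

context
  fixes n :: nat
  assumes n: "4 \<le> n"
begin

abbreviation "Y \<equiv> prefix_deviation n (n div 2)"
abbreviation "x\<^sub>0 \<equiv> half_ones n"
abbreviation "\<pi> \<equiv> symm n (point_mass x\<^sub>0)"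
abbreviation "\<mu> \<equiv> evol n (point_mass x\<^sub>0)"

private lemma n_ge_2: "2 \<le> n" using n by simp

lemma symm_half_ones_nonneg: "0 \<le> \<pi> z"
  by (rule symm_nonneg) (simp add: point_mass_def)

lemma symm_half_ones_total: "(\<Sum>z\<in>OmegaQ n. \<pi> z) = 1"
  using symm_total[of n "point_mass x\<^sub>0"] point_mass_is_dist[OF half_ones_in_OmegaQ]
  by (simp add: is_dist_def)

lemma evol_half_ones_total: "(\<Sum>z\<in>OmegaQ n. \<mu> t z) = 1"
  using evol_point_mass_pairing[OF half_ones_in_OmegaQ, where t = t and f = "\<lambda>_. 1"]
  by (simp add: Tact_iter_const[OF n_ge_2 half_ones_in_OmegaQ])

lemma symm_pairing_prefix_deviation: "(\<Sum>z\<in>OmegaQ n. \<pi> z * Y z) = 0"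
proof -
  have "(\<Sum>z\<in>OmegaQ n. \<pi> z * Y z) = (\<Sum>z\<in>OmegaQ n. \<pi> z * Tact n Y z)"
    by (simp add: symm_pairing_Tact[OF n_ge_2])
  also have "\<dots> = (1 - 2 / real n) * (\<Sum>z\<in>OmegaQ n. \<pi> z * Y z)"
    by (simp add: sum_distrib_left Tact_prefix_deviation[OF n_ge_2] algebra_simps cong: sum.cong)
  finally show ?thesis using n by (simp add: algebra_simps)
qed

lemma symm_pairing_prefix_deviation_sq: "(\<Sum>z\<in>OmegaQ n. \<pi> z * (Y z)^2) \<le> real n / 4"
proof -
  define V where "V = (\<Sum>z\<in>OmegaQ n. \<pi> z * (Y z)^2)"
  have "V = (\<Sum>z\<in>OmegaQ n. \<pi> z * Tact n (\<lambda>z. (Y z)^2) z)"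
    by (simp add: symm_pairing_Tact[OF n_ge_2] V_def)
  also have "\<dots> \<le> (\<Sum>z\<in>OmegaQ n. \<pi> z * ((1 - 4 / real n) * (Y z)^2 + 1))"
    by (rule sum_mono, rule mult_left_mono)
       (simp_all add: Tact_prefix_deviation_sq_le[OF n_ge_2] symm_half_ones_nonneg)
  also have "\<dots> = (\<Sum>z\<in>OmegaQ n. (1 - 4 / real n) * (\<pi> z * (Y z)^2) + \<pi> z)"
    by (simp add: algebra_simps)
  also have "\<dots> = (1 - 4 / real n) * V + 1"
    by (simp add: sum.distrib sum_distrib_left symm_half_ones_total V_def)
  finally show ?thesis using n by (simp add: V_def field_simps)
qed

lemma abs_prefix_deviation_le: "z \<in> OmegaQ n \<Longrightarrow> \<bar>Y z\<bar> \<le> real n"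
proof -
  have b: "0 \<le> bitval z a" "bitval z a \<le> 1" for a by (auto simp: bitval_def)
  have "0 \<le> (\<Sum>a<n div 2. bitval z a)" "(\<Sum>a<n div 2. bitval z a) \<le> real (n div 2)"
    using sum_mono[of "{..<n div 2}" "bitval z" "\<lambda>_. 1"] b by (simp_all add: sum_nonneg)
  moreover have "real (weight n z) \<le> real n"
    using sum_mono[of "{..<n}" "bitval z" "\<lambda>_. 1"] b by (simp add: weight_eq_sum_bitval)
  then have "real (n div 2) * real (weight n z) / real n \<le> real (n div 2)"
    using n by (simp add: divide_le_eq mult_left_mono)
  moreover have "real (n div 2) \<le> real n" "0 \<le> real (n div 2) * real (weight n z) / real n"
    by simp_all
  ultimately show "\<bar>Y z\<bar> \<le> real n" unfolding prefix_deviation_def abs_le_iff by linarith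
qed

lemma prefix_deviation_half_ones: "real n / 8 \<le> Y x\<^sub>0"
proof -
  define k where "k = n div 2"
  have bits: "bitval x\<^sub>0 a = (if a < k then 1 else 0)" if "a < n" for a
    using that by (simp add: bitval_def half_ones_def nth_append k_def)
  have "(\<Sum>a<n. bitval x\<^sub>0 a) = (\<Sum>a<n. if a < k then 1 else 0)"
    by (simp add: bits)
  also have "\<dots> = real k"
  proof -
    have "{..<n} \<inter> {a. a < k} = {..<k}" by (auto simp: k_def)
    then show ?thesis by (simp add: sum.If_cases)
  qed
  finally have weight: "(\<Sum>a<n. bitval x\<^sub>0 a) = real k" .
  have "(\<Sum>a<k. bitval x\<^sub>0 a) = (\<Sum>a<k. 1)"
    by (rule sum.cong) (auto simp: bits k_def)
  then have "Y x\<^sub>0 = real k * (real n - real k) / real n"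
    using n weight by (simp add: prefix_deviation_def weight_eq_sum_bitval bits k_def[symmetric] field_simps)
  also have "\<dots> \<ge> (real n / 4) * (real n / 2) / real n"
    using n by (intro divide_right_mono mult_mono) (auto simp: k_def)
  finally show ?thesis using n by (simp add: field_simps)
qed

lemma tv_half_ones_ge_first_moment:
  "(1 - 2 / real n)^t * Y x\<^sub>0 \<le> 2 * real n * tv n (\<mu> t) \<pi>"
proof -
  have "(\<Sum>z\<in>OmegaQ n. (\<mu> t z - \<pi> z) * Y z) = (1 - 2 / real n)^t * Y x\<^sub>0"
    using evol_point_mass_pairing[OF half_ones_in_OmegaQ, where t = t and f = Y]
      symm_pairing_prefix_deviation Tact_iter_prefix_deviation[OF n_ge_2 _ half_ones_in_OmegaQ]
    by (simp add: left_diff_distrib sum_subtractf)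
  moreover have "\<bar>\<Sum>z\<in>OmegaQ n. (\<mu> t z - \<pi> z) * Y z\<bar> \<le> 2 * real n * tv n (\<mu> t) \<pi>"
    by (rule pairing_le_tv) (rule abs_prefix_deviation_le)
  ultimately show ?thesis by simp
qed

text \<open>Chebyshev's inequality for \<open>Y\<close> under \<open>\<mu> t\<close>, whose mean is \<open>m\<close> and whose variance is at most
  \<open>n / 4\<close>: the probability that \<open>Y < m / 2\<close> is at most \<open>n / m\<^sup>2\<close>.\<close>

lemma evol_half_ones_below_half_mean:
  fixes t :: nat
  defines "m \<equiv> (1 - 2 / real n)^t * Y x\<^sub>0"
  shows "1 - (Tact n ^^ t) (\<lambda>z. if m / 2 \<le> Y z then 1 else 0) x\<^sub>0 \<le> real n / m^2"
proof -
  have m: "0 < m" using prefix_deviation_half_ones n by (simp add: m_def field_simps)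
  have "1 - (Tact n ^^ t) (\<lambda>z. if m / 2 \<le> Y z then 1 else 0) x\<^sub>0
      = (Tact n ^^ t) (\<lambda>z. 1 * 1 + (-1) * (if m / 2 \<le> Y z then 1 else 0)) x\<^sub>0"
    by (simp only: Tact_iter_linear[OF half_ones_in_OmegaQ] Tact_iter_const[OF n_ge_2 half_ones_in_OmegaQ])
  also have "\<dots> \<le> (Tact n ^^ t) (\<lambda>z. (4 / m^2) * (Y z - m)^2 + 0 * 0) x\<^sub>0"
  proof (rule Tact_iter_mono[OF n_ge_2 half_ones_in_OmegaQ])
    fix z
    show "1 * 1 + (-1) * (if m / 2 \<le> Y z then 1 else 0) \<le> (4 / m^2) * (Y z - m)^2 + 0 * 0"
    proof (cases "m / 2 \<le> Y z")
      case False
      then have "(m / 2)^2 \<le> (m - Y z)^2" using m by (intro power_mono) auto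
      then have "(m / 2)^2 \<le> (Y z - m)^2" by (simp add: power2_commute)
      then have "4 / m^2 * (m / 2)^2 \<le> 4 / m^2 * (Y z - m)^2" by (rule mult_left_mono) simp
      moreover have "4 / m^2 * (m / 2)^2 = 1" using m by (simp add: power_divide)
      ultimately show ?thesis using False by simp
    qed simp
  qed
  also have "\<dots> = (4 / m^2) * (Tact n ^^ t) (\<lambda>z. (Y z - m)^2) x\<^sub>0"
    by (simp only: Tact_iter_linear[OF half_ones_in_OmegaQ])
  also have "\<dots> = (4 / m^2) * ((Tact n ^^ t) (\<lambda>z. (Y z)^2) x\<^sub>0 - m^2)"
  proof -
    have "(Tact n ^^ t) Y x\<^sub>0 = m"
      using Tact_iter_prefix_deviation[OF n_ge_2 _ half_ones_in_OmegaQ] by (simp add: m_def)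
    then show ?thesis
      by (subst Tact_iter_square_deviation[OF n_ge_2 half_ones_in_OmegaQ]) (simp add: power2_eq_square)
  qed
  also have "\<dots> \<le> (4 / m^2) * (real n / 4)"
  proof -
    have "1 - 4 / real n \<le> (1 - 2 / real n)^2" "0 \<le> 1 - 4 / real n"
      using n by (simp_all add: power2_eq_square field_simps)
    then have "(1 - 4 / real n)^t \<le> ((1 - 2 / real n)^2)^t"
      by (rule power_mono)
    also have "\<dots> = ((1 - 2 / real n)^t)^2"
      by (simp flip: power_mult add: mult.commute)
    finally have "(1 - 4 / real n)^t \<le> ((1 - 2 / real n)^t)^2" .
    then have "(1 - 4 / real n)^t * (Y x\<^sub>0)^2 \<le> m^2"
      by (simp add: m_def power_mult_distrib mult_right_mono)
    then have "(Tact n ^^ t) (\<lambda>z. (Y z)^2) x\<^sub>0 - m^2 \<le> real n / 4"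
      using Tact_iter_prefix_deviation_sq_le[OF n _ half_ones_in_OmegaQ, of "n div 2" t] by simp
    then show ?thesis by (rule mult_left_mono) simp
  qed
  finally show ?thesis using m by (simp add: field_simps)
qed

lemma symm_half_ones_above:
  assumes \<theta>: "0 < \<theta>"
  shows "(\<Sum>z\<in>OmegaQ n. \<pi> z * (if \<theta> \<le> Y z then 1 else 0)) \<le> real n / (4 * \<theta>^2)"
proof -
  have "(\<Sum>z\<in>OmegaQ n. \<pi> z * (if \<theta> \<le> Y z then 1 else 0)) \<le> (\<Sum>z\<in>OmegaQ n. \<pi> z * ((Y z)^2 / \<theta>^2))"
  proof (rule sum_mono, rule mult_left_mono)
    fix z
    show "(if \<theta> \<le> Y z then 1 else 0) \<le> (Y z)^2 / \<theta>^2"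
      using \<theta> power_mono[of \<theta> "Y z" 2] by (auto simp: field_simps)
  qed (rule symm_half_ones_nonneg)
  also have "\<dots> = (\<Sum>z\<in>OmegaQ n. \<pi> z * (Y z)^2) / \<theta>^2"
    by (simp add: sum_divide_distrib)
  also have "\<dots> \<le> real n / (4 * \<theta>^2)"
    using symm_pairing_prefix_deviation_sq \<theta> by (simp add: divide_right_mono field_simps)
  finally show ?thesis .
qed

lemma tv_half_ones_ge_second_moment:
  assumes big: "4 * real n \<le> ((1 - 2 / real n)^t * Y x\<^sub>0)^2"
  shows "1/2 \<le> tv n (\<mu> t) \<pi>"
proof -
  define m where "m = (1 - 2 / real n)^t * Y x\<^sub>0"
  define h where "h z = (if m / 2 \<le> Y z then 1 else 0::real)" for z
  have m: "0 < m" using prefix_deviation_half_ones n by (simp add: m_def field_simps)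
  have "(\<Sum>z\<in>OmegaQ n. (\<mu> t z - \<pi> z) * h z) \<le> tv n (\<mu> t) \<pi>"
    by (rule tv_ge_pairing) (auto simp: evol_half_ones_total symm_half_ones_total h_def)
  moreover have "(\<Sum>z\<in>OmegaQ n. (\<mu> t z - \<pi> z) * h z)
      = (Tact n ^^ t) h x\<^sub>0 - (\<Sum>z\<in>OmegaQ n. \<pi> z * h z)"
    by (simp add: evol_point_mass_pairing[OF half_ones_in_OmegaQ] left_diff_distrib sum_subtractf)
  moreover have "1 - (Tact n ^^ t) h x\<^sub>0 \<le> real n / m^2"
    using evol_half_ones_below_half_mean[of t] by (simp add: h_def[abs_def] m_def)
  moreover have "(\<Sum>z\<in>OmegaQ n. \<pi> z * h z) \<le> real n / m^2"
    using symm_half_ones_above[of "m / 2"] m by (simp add: h_def power2_eq_square)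
  moreover have "real n / m^2 \<le> 1/4"
  proof -
    have "4 * real n \<le> m^2" "0 < m^2" using big m by (simp add: m_def, simp)
    then show ?thesis by (simp add: divide_le_eq)
  qed
  ultimately show ?thesis by linarith
qed

lemma prefix_deviation_mean_ge: "exp (- 4 * real t / real n) * (real n / 8) \<le> (1 - 2 / real n)^t * Y x\<^sub>0"
proof -
  have "exp (- 4 * real t / real n) = exp (- 2 * (2 / real n)) ^ t"
    by (simp add: exp_of_nat_mult[symmetric] field_simps)
  also have "\<dots> \<le> (1 - 2 / real n)^t"
    using n by (intro power_mono exp_minus_two_mult_le) simp_all
  moreover have "0 \<le> 1 - 2 / real n" using n by (simp add: field_simps)
  ultimately show ?thesis
    using prefix_deviation_half_ones by (intro mult_mono) simp_all
qed

lemma mixing_time_ge_second_moment: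
  assumes \<epsilon>: "\<epsilon> < 1/2" and tv: "tv n (\<mu> t) \<pi> \<le> \<epsilon>"
  shows "real n / 8 * ln (real n / 256) \<le> real t"
proof -
  define E where "E = exp (- 4 * real t / real n)"
  have "((1 - 2 / real n)^t * Y x\<^sub>0)^2 < 4 * real n"
    using tv_half_ones_ge_second_moment[of t] \<epsilon> tv by linarith
  moreover have "(E * (real n / 8))^2 \<le> ((1 - 2 / real n)^t * Y x\<^sub>0)^2"
    using prefix_deviation_mean_ge[of t] by (intro power_mono) (simp_all add: E_def)
  ultimately have "(E * (real n / 8))^2 < 4 * real n" by linarith
  moreover have "(E * (real n / 8))^2 = (E * E * real n) * real n / 64"
    by (simp add: power2_eq_square)
  ultimately have "(E * E * real n) * real n < 256 * real n" by simp
  then have "E * E * real n < 256"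
    using n by simp
  moreover have "E * E = exp (- 8 * real t / real n)"
    by (simp add: E_def flip: exp_add)
  ultimately have "exp (- 8 * real t / real n) < exp (ln (256 / real n))"
    using n by (simp add: field_simps)
  then have "- 8 * real t / real n < ln (256 / real n)" by simp
  then show ?thesis using n by (simp add: ln_div field_simps)
qed

lemma mixing_time_ge_first_moment:
  assumes \<epsilon>: "0 < \<epsilon>" and tv: "tv n (\<mu> t) \<pi> \<le> \<epsilon>"
  shows "real n / 4 * (ln (1 / \<epsilon>) - ln 16) \<le> real t"
proof -
  have "2 * real n * tv n (\<mu> t) \<pi> \<le> 2 * real n * \<epsilon>"
    using tv by (simp add: mult_left_mono)
  then have "exp (- 4 * real t / real n) * (real n / 8) \<le> 2 * real n * \<epsilon>"
    using prefix_deviation_mean_ge[of t] tv_half_ones_ge_first_moment[of t] by linarith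
  then have "exp (- 4 * real t / real n) \<le> 16 * \<epsilon>" using n by (simp add: field_simps)
  then have "- 4 * real t / real n \<le> ln (16 * \<epsilon>)" using \<epsilon> by (simp add: ln_ge_iff)
  then show ?thesis using n \<epsilon> by (simp add: ln_mult ln_div field_simps)
qed

end

lemma contraction_rate_pow_le_exp:
  assumes n: "4 \<le> n"
  shows "contraction_rate n ^ t \<le> exp (- real t / real n)"
proof -
  have "contraction_rate n \<le> 1 - 1 / real n"
    using n unfolding contraction_rate_def by (simp add: field_simps power2_eq_square)
  also have "\<dots> \<le> exp (- 1 / real n)"
    using exp_ge_add_one_self[of "- 1 / real n"] by simp
  finally have "contraction_rate n ^ t \<le> exp (- 1 / real n) ^ t"
    by (rule power_mono[OF _ contraction_rate_nonneg])
  also have "\<dots> = exp (- real t / real n)"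
    by (simp add: exp_of_nat_mult[symmetric] field_simps)
  finally show ?thesis .
qed

lemma tv_evol_symm_le_eps:
  assumes n: "4 \<le> n" and \<epsilon>: "0 < \<epsilon>" "\<epsilon> \<le> 1" and \<nu>: "is_dist n \<nu>"
    and t: "real n * ln (real n / \<epsilon>) \<le> real t"
  shows "tv n (evol n \<nu> t) (symm n \<nu>) \<le> \<epsilon>"
proof -
  have "tv n (evol n \<nu> t) (symm n \<nu>) \<le> contraction_rate n ^ t * real n"
    using n \<nu> by (intro tv_evol_symm_le) simp_all
  also have "\<dots> \<le> exp (- real t / real n) * real n"
    using contraction_rate_pow_le_exp[OF n] by (simp add: mult_right_mono)
  also have "\<dots> \<le> exp (- ln (real n / \<epsilon>)) * real n"
    using t n by (simp add: field_simps)
  also have "\<dots> = \<epsilon>"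
    using n \<epsilon> by (simp add: exp_minus field_simps)
  finally show ?thesis .
qed

lemma tmixT_le:
  assumes T: "\<And>\<nu>. is_dist n \<nu> \<Longrightarrow> tv n (evol n \<nu> T) (symm n \<nu>) \<le> \<epsilon>"
  shows "tmixT n \<epsilon> \<le> T"
  unfolding tmixT_def
proof (rule cSup_least)
  have "is_dist n (point_mass (replicate n False))"
    by (simp add: point_mass_is_dist OmegaQ_def)
  then show "(\<lambda>\<nu>. LEAST t. tv n (evol n \<nu> t) (symm n \<nu>) \<le> \<epsilon>) ` {\<nu>. is_dist n \<nu>} \<noteq> {}"
    by blast
next
  fix t assume "t \<in> (\<lambda>\<nu>. LEAST t. tv n (evol n \<nu> t) (symm n \<nu>) \<le> \<epsilon>) ` {\<nu>. is_dist n \<nu>}"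
  then obtain \<nu> where "is_dist n \<nu>" "t = (LEAST t. tv n (evol n \<nu> t) (symm n \<nu>) \<le> \<epsilon>)"
    by blast
  then show "t \<le> T" by (simp add: Least_le T)
qed

lemma tmixT_ge:
  assumes T: "\<And>\<nu>. is_dist n \<nu> \<Longrightarrow> tv n (evol n \<nu> T) (symm n \<nu>) \<le> \<epsilon>"
    and \<nu>: "is_dist n \<nu>" and B: "\<And>t. tv n (evol n \<nu> t) (symm n \<nu>) \<le> \<epsilon> \<Longrightarrow> B \<le> real t"
  shows "B \<le> real (tmixT n \<epsilon>)"
proof -
  define F where "F \<nu> = (LEAST t. tv n (evol n \<nu> t) (symm n \<nu>) \<le> \<epsilon>)" for \<nu>
  have "F \<nu> \<le> tmixT n \<epsilon>"
    unfolding tmixT_def F_def[symmetric]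
  proof (rule cSup_upper)
    show "bdd_above (F ` {\<nu>. is_dist n \<nu>})"
    proof (rule bdd_aboveI2)
      fix \<nu> assume "\<nu> \<in> {\<nu>. is_dist n \<nu>}"
      then show "F \<nu> \<le> T" unfolding F_def by (intro Least_le T) simp
    qed
  qed (use \<nu> in simp)
  moreover have "B \<le> real (F \<nu>)"
    unfolding F_def by (rule B, rule LeastI[of _ T], rule T[OF \<nu>])
  ultimately show ?thesis by linarith
qed

lemma tmixT_upper:
  assumes n: "4 \<le> n" and \<epsilon>: "0 < \<epsilon>" "\<epsilon> \<le> 1"
  shows "real (tmixT n \<epsilon>) \<le> 2 * real n * ln (real n / \<epsilon>)"
proof -
  define T where "T = nat \<lceil>real n * ln (real n / \<epsilon>)\<rceil>"
  have "1 \<le> ln (real n / \<epsilon>)"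
  proof -
    have "exp 1 \<le> real n"
      using exp_le n by linarith
    also have "\<dots> \<le> real n / \<epsilon>" using \<epsilon> n by (simp add: field_simps)
    finally show ?thesis using n \<epsilon> by (simp add: ln_ge_iff)
  qed
  then have "1 * 1 \<le> real n * ln (real n / \<epsilon>)"
    using n by (intro mult_mono) simp_all
  then have ge_1: "1 \<le> real n * ln (real n / \<epsilon>)" by simp
  have "tmixT n \<epsilon> \<le> T"
    by (rule tmixT_le, rule tv_evol_symm_le_eps[OF n \<epsilon>]) (simp_all add: T_def real_nat_ceiling_ge)
  then have "real (tmixT n \<epsilon>) \<le> real T" by simp
  also have "\<dots> \<le> real n * ln (real n / \<epsilon>) + 1"
    using ge_1 by (simp add: T_def)
  also have "\<dots> \<le> 2 * real n * ln (real n / \<epsilon>)"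
    using ge_1 by simp
  finally show ?thesis .
qed

text \<open>The two Wilson bounds \<open>(n/8) ln (n/256)\<close> and \<open>(n/4) ln (1/(16 \<epsilon>))\<close> together dominate
  \<open>(n/32) ln (n/\<epsilon>)\<close> once \<open>ln n \<ge> 4 ln 16\<close>.\<close>

lemma tmixT_lower:
  assumes n: "65536 \<le> n" and \<epsilon>: "0 < \<epsilon>" "\<epsilon> < 1/2"
  shows "1/32 * real n * ln (real n / \<epsilon>) \<le> real (tmixT n \<epsilon>)"
proof -
  have n4: "4 \<le> n" and n0: "0 < real n" using n by simp_all
  define T where "T = nat \<lceil>real n * ln (real n / \<epsilon>)\<rceil>"
  define a where "a = ln (real n)"
  define e where "e = ln (1 / \<epsilon>)"
  define l where "l = ln (16::real)"
  have l: "0 < l" by (simp add: l_def)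
  have a: "4 * l \<le> a"
  proof -
    have "ln (65536::real) \<le> ln (real n)" using n by simp
    moreover have "ln (65536::real) = 4 * ln 16" using ln_realpow[of 16 4] by simp
    ultimately show ?thesis by (simp add: a_def l_def)
  qed
  have e: "0 \<le> e" using \<epsilon> by (simp add: e_def)
  have bounds: "real n / 8 * (a - 2 * l) \<le> real t \<and> real n / 4 * (e - l) \<le> real t"
    if "tv n (evol n (point_mass (half_ones n)) t) (symm n (point_mass (half_ones n))) \<le> \<epsilon>" for t
  proof -
    have "ln (real n / 256) = a - 2 * l"
      using n0 ln_realpow[of 16 2] by (simp add: ln_div a_def l_def)
    then show ?thesis
      using mixing_time_ge_second_moment[OF n4] mixing_time_ge_first_moment[OF n4] \<epsilon> that
      by (simp add: e_def l_def)
  qed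
  have "1/32 * real n * (a + e) \<le> real (tmixT n \<epsilon>)"
  proof (rule tmixT_ge[where T = T, OF _ point_mass_is_dist[OF half_ones_in_OmegaQ]])
    show "tv n (evol n \<nu> T) (symm n \<nu>) \<le> \<epsilon>" if "is_dist n \<nu>" for \<nu>
      using \<epsilon> by (intro tv_evol_symm_le_eps[OF n4 _ _ that]) (simp_all add: T_def real_nat_ceiling_ge)
  next
    fix t assume "tv n (evol n (point_mass (half_ones n)) t) (symm n (point_mass (half_ones n))) \<le> \<epsilon>"
    then have A: "real n / 8 * (a - 2 * l) \<le> real t" and B: "real n / 4 * (e - l) \<le> real t"
      using bounds by blast+
    have "real n / 8 * (a / 2) \<le> real n / 8 * (a - 2 * l)" using a n0 by (intro mult_left_mono) auto
    then have A': "real n * a / 16 \<le> real t" using A by (simp add: field_simps)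
    show "1/32 * real n * (a + e) \<le> real t"
    proof (cases "2 * l \<le> e")
      case True
      have "real n / 4 * (e / 2) \<le> real n / 4 * (e - l)" using True n0 by (intro mult_left_mono) auto
      then have "real n * e / 8 \<le> real t" using B by (simp add: field_simps)
      moreover have "0 \<le> real n * a" using a l by simp
      ultimately show ?thesis using A' by (simp add: field_simps)
    next
      case False
      then have "real n * e \<le> real n * a" using a l by (intro mult_left_mono) auto
      then show ?thesis using A' by (simp add: field_simps)
    qed
  qed
  moreover have "ln (real n / \<epsilon>) = a + e" using \<epsilon> n0 by (simp add: ln_div a_def e_def)
  ultimately show ?thesis by simp
qed

theorem lemma3:
  shows "(\<forall>n\<ge>2. \<forall>\<nu>. is_dist n \<nu> \<longrightarrow>
            (\<forall>q\<in>OmegaQ n. (\<lambda>t. vecmat n \<nu> (matpow n (Tm n) t) q) \<longlonglongrightarrow> symm n \<nu> q))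
       \<and> (\<exists>c>0. \<exists>C>0. \<exists>N. \<forall>n\<ge>N. \<forall>\<epsilon>::real. 0 < \<epsilon> \<and> \<epsilon> < 1/2 \<longrightarrow>
            c * real n * ln (real n / \<epsilon>) \<le> real (tmixT n \<epsilon>) \<and>
            real (tmixT n \<epsilon>) \<le> C * real n * ln (real n / \<epsilon>))"
proof
  show "\<forall>n\<ge>2. \<forall>\<nu>. is_dist n \<nu> \<longrightarrow>
            (\<forall>q\<in>OmegaQ n. (\<lambda>t. vecmat n \<nu> (matpow n (Tm n) t) q) \<longlonglongrightarrow> symm n \<nu> q)"
    by (blast intro: evol_tendsto_symm)
  have "\<forall>n\<ge>65536. \<forall>\<epsilon>::real. 0 < \<epsilon> \<and> \<epsilon> < 1/2 \<longrightarrow>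
            1/32 * real n * ln (real n / \<epsilon>) \<le> real (tmixT n \<epsilon>) \<and>
            real (tmixT n \<epsilon>) \<le> 2 * real n * ln (real n / \<epsilon>)"
    using tmixT_lower tmixT_upper by force
  then show "\<exists>c>0. \<exists>C>0. \<exists>N. \<forall>n\<ge>N. \<forall>\<epsilon>::real. 0 < \<epsilon> \<and> \<epsilon> < 1/2 \<longrightarrow>
            c * real n * ln (real n / \<epsilon>) \<le> real (tmixT n \<epsilon>) \<and>
            real (tmixT n \<epsilon>) \<le> C * real n * ln (real n / \<epsilon>)"
    by (intro exI[of _ "1/32"] conjI exI[of _ "2::real"] exI[of _ "65536::nat"]) simp_all
qed

end
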